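(* Assume the setting in the context and let $m$ be a positive integer. There exist a positive integer $D_0$ and a family $\tilde\Theta=\{\tilde\theta(a)\}_{a\in A}$, each $f(\cdot,\tilde\theta(a))$ a residual network of size $(d,(6^{\alpha}+1)m,D_0,\alpha+1)$, such that $$\mathcal R_{\mathcal D}(\tilde\Theta)\le\frac{1}{(1-\gamma)^2}\Big(256|A|^5\frac{\|r\|_{\mathcal B}^2}{m}+576\,\gamma^2C_T^2(\Delta t)^2|A|^7\|r\|_{\mathcal B}^2\Big)$$ and $\|\tilde\Theta\|_{\mathcal P}\le\frac{24}{1-\gamma}|A|^{7/2}\|r\|_{\mathcal B}$.
   Context: Residual networks: for positive integers $d,m,D,L$, a residual network of size $(d,m,D,L)$ is a function $f(\cdot,\theta):\mathbb R^d\to\mathbb R$, $f(x,\theta)=u^{\top}h^{[L]}$, where $h^{[0]}=Vx$ and $h^{[l]}=h^{[l-1]}+U^{[l]}\sigma(W^{[l]}h^{[l-1]})$ for $l=1,\dots,L$, with $V\in\mathbb R^{D\times d}$, $W^{[l]}\in\mathbb R^{m\times D}$, $U^{[l]}\in\mathbb R^{D\times m}$, $u\in\mathbb R^D$, $\sigma(z)=\max(z,0)$ applied entrywise, and $\theta=(u,V,\{W^{[l]}\}_{l=1}^L,\{U^{[l]}\}_{l=1}^L)$. Its weighted path norm is $\|\theta\|_{\mathcal P}=\big\||u|^{\top}(I+3|U^{[L]}||W^{[L]}|)\cdots(I+3|U^{[1]}||W^{[1]}|)|V|\big\|_1$, where $|\cdot|$ of a matrix/vector is entrywise absolute value and $I$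 is the $D\times D$ identity. For a family $\Theta=\{\theta(a)\}_{a\in A}$ of parameters (one network per action, all of the same size), $f(s,\theta(a))$ denotes the $a$-th network and $\|\Theta\|_{\mathcal P}=\sum_{a\in A}\|\theta(a)\|_{\mathcal P}$. Barron space: for a compact $S\subset\mathbb R^d$, $h:S\to\mathbb R$ is in the Barron space $\mathcal B(S)$ if there is a probability measure $\rho$ on $\mathbb R\times\mathbb R^d$ with $h(x)=\mathbb E_{(u,w)\sim\rho}[u\,\sigma(w^{\top}x)]$ for all $x\in S$; its Barron norm is $\|h\|_{\mathcal B}=\inf_\rho(\mathbb E_{\rho}[u^2\|w\|_1^2])^{1/2}$, the infimum over all such $\rho$. For $r:S\times A\to\mathbb R$ with each $r(\cdot,a)\in\mathcal B(S)$, $\|r\|_{\mathcal B}=(\sum_{a\in A}\|r(\cdot,a)\|_{\mathcal B}^2)^{1/2}$. Setting: $S\subseteq[0,1]^d$ is compact with positive Lebesgue measure (state space); $A$ is a finite action set with $|A|=2^{\alpha}$, $\alpha\ge 0$ an integer, identified with $\{1,\dots,2^\alpha\}$; $\gamma\in(0,1)$. The reward $r:S\times A\to\mathbb R$ satisfies: each $r(\cdot,a)$ is continuous and lies in $\mathcal B(S)$, and $|r(s,a)|\le 1$ for all $(s,a)$. The transition $\tilde g:S\times A\times[0,\infty)\to S$ satisfies $\tilde g(s,a,0)=s$, $\tilde g(\tilde g(s,a,t),a,t')=\tilde g(s,a,t+t')$ for $t,t'\ge0$, and there is $C_T>0$ with $\|\tilde g(s,a,t)-\tilde g(s,a,t+\Delta)\|_\infty\le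 C_T\Delta$ for all $s\in S,a\in A,t\ge0,\Delta\in(0,1)$. A time step $\Delta t\in(0,1)$ is fixed. $\mathcal D$ is the uniform distribution on $S$ and $\mathcal U$ the uniform distribution on $A$. The Bellman optimal loss is $\mathcal R_{\mathcal D}(\Theta)=\frac12\mathbb E_{s\sim\mathcal D,a\sim\mathcal U}\big(f(s,\theta(a))-r(s,a)-\gamma\max_{a'\in A}f(s',\theta(a'))\big)^2$ with $s'=\tilde g(s,a,\Delta t)$. *)

theory Defs
  imports "HOL-Analysis.Analysis" "HOL-Probability.Probability"
begin

definition relu :: "real \<Rightarrow> real" where
  "relu z = max z 0"

text \<open>Parameters of a residual network with input space real^'d.
  u : D-vector (entries indexed 0..D-1), V : D x d matrix (rows 0..D-1, columns 'd),
  W l : m x D matrix of layer l (l = 1..L), U l : D x m matrix of layer l.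
  Entries outside these index ranges are ignored by every definition below.\<close>
datatype 'd resparam = ResParam
  (rp_u: "nat \<Rightarrow> real")
  (rp_V: "nat \<Rightarrow> 'd \<Rightarrow> real")
  (rp_W: "nat \<Rightarrow> nat \<Rightarrow> nat \<Rightarrow> real")
  (rp_U: "nat \<Rightarrow> nat \<Rightarrow> nat \<Rightarrow> real")

primrec res_hidden :: "nat \<Rightarrow> nat \<Rightarrow> ('d::finite) resparam \<Rightarrow> real^'d \<Rightarrow> nat \<Rightarrow> nat \<Rightarrow> real" where
  "res_hidden m D \<theta> x 0 = (\<lambda>i. \<Sum>j\<in>UNIV. rp_V \<theta> i j * x $ j)"
| "res_hidden m D \<theta> x (Suc l) = (\<lambda>i. res_hidden m D \<theta> x l i +
      (\<Sum>k<m. rp_U \<theta> (Suc l) i k *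
          relu (\<Sum>p<D. rp_W \<theta> (Suc l) k p * res_hidden m D \<theta> x l p)))"

definition resnet :: "nat \<Rightarrow> nat \<Rightarrow> nat \<Rightarrow> ('d::finite) resparam \<Rightarrow> real^'d \<Rightarrow> real" where
  "resnet m D L \<theta> x = (\<Sum>i<D. rp_u \<theta> i * res_hidden m D \<theta> x L i)"

text \<open>The D x d matrix (I+3|U^[l]||W^[l]|)...(I+3|U^[1]||W^[1]|)|V|.\<close>
primrec pn_mat :: "nat \<Rightarrow> nat \<Rightarrow> ('d::finite) resparam \<Rightarrow> nat \<Rightarrow> nat \<Rightarrow> 'd \<Rightarrow> real" where
  "pn_mat m D \<theta> 0 = (\<lambda>i j. \<bar>rp_V \<theta> i j\<bar>)"
| "pn_mat m D \<theta> (Suc l) = (\<lambda>i j. pn_mat m D \<theta> l i j +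
      3 * (\<Sum>p<D. (\<Sum>k<m. \<bar>rp_U \<theta> (Suc l) i k\<bar> * \<bar>rp_W \<theta> (Suc l) k p\<bar>) * pn_mat m D \<theta> l p j))"

definition path_norm :: "nat \<Rightarrow> nat \<Rightarrow> nat \<Rightarrow> ('d::finite) resparam \<Rightarrow> real" where
  "path_norm m D L \<theta> = (\<Sum>j\<in>UNIV. \<bar>\<Sum>i<D. \<bar>rp_u \<theta> i\<bar> * pn_mat m D \<theta> L i j\<bar>)"

definition family_path_norm :: "nat \<Rightarrow> nat \<Rightarrow> nat \<Rightarrow> ('a::finite \<Rightarrow> ('d::finite) resparam) \<Rightarrow> real" where
  "family_path_norm m D L \<Theta> = (\<Sum>a\<in>UNIV. path_norm m D L (\<Theta> a))"

definition l1norm :: "real^'d::finite \<Rightarrow> real" where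
  "l1norm w = (\<Sum>j\<in>UNIV. \<bar>w $ j\<bar>)"

definition barron_repr :: "(real^'d::finite) set \<Rightarrow> (real^'d \<Rightarrow> real) \<Rightarrow> (real \<times> (real^'d)) measure \<Rightarrow> bool" where
  "barron_repr S h \<rho> \<longleftrightarrow> prob_space \<rho> \<and> sets \<rho> = sets borel \<and>
     (\<forall>x\<in>S. integrable \<rho> (\<lambda>(u,w). u * relu (w \<bullet> x)) \<and>
             h x = (\<integral>(u,w). u * relu (w \<bullet> x) \<partial>\<rho>))"

definition barron_moment :: "(real \<times> (real^'d::finite)) measure \<Rightarrow> ennreal" where
  "barron_moment \<rho> = (\<integral>\<^sup>+(u,w). ennreal (u\<^sup>2 * (l1norm w)\<^sup>2) \<partial>\<rho>)"

definition barron_space :: "(real^'d::finite) set \<Rightarrow> (real^'d \<Rightarrow> real) \<Rightarrow> bool" where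
  "barron_space S h \<longleftrightarrow> (\<exists>\<rho>. barron_repr S h \<rho> \<and> barron_moment \<rho> < \<infinity>)"

definition barron_norm :: "(real^'d::finite) set \<Rightarrow> (real^'d \<Rightarrow> real) \<Rightarrow> real" where
  "barron_norm S h = sqrt (Inf {enn2real (barron_moment \<rho>) | \<rho>. barron_repr S h \<rho> \<and> barron_moment \<rho> < \<infinity>})"

definition reward_barron_norm :: "(real^'d::finite) set \<Rightarrow> (real^'d \<Rightarrow> 'a::finite \<Rightarrow> real) \<Rightarrow> real" where
  "reward_barron_norm S r = sqrt (\<Sum>a\<in>UNIV. (barron_norm S (\<lambda>s. r s a))\<^sup>2)"

definition bellman_loss ::
  "(real^'d::finite) set \<Rightarrow> (real^'d \<Rightarrow> 'a::finite \<Rightarrow> real) \<Rightarrow> (real^'d \<Rightarrow> 'a \<Rightarrow> real \<Rightarrow> real^'d)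
   \<Rightarrow> real \<Rightarrow> real \<Rightarrow> nat \<Rightarrow> nat \<Rightarrow> nat \<Rightarrow> ('a \<Rightarrow> 'd resparam) \<Rightarrow> ennreal" where
  "bellman_loss S r g \<gamma> \<Delta>t m D L \<Theta> =
     ennreal (1 / (2 * real CARD('a))) *
     (\<Sum>a\<in>UNIV. \<integral>\<^sup>+ s. ennreal ((resnet m D L (\<Theta> a) s - r s a
          - \<gamma> * Max (range (\<lambda>a'. resnet m D L (\<Theta> a') (g s a \<Delta>t))))\<^sup>2) \<partial>(uniform_measure lborel S))"

end

theory Submission
  imports Defs
begin

text \<open>Each reward \<open>r(\<cdot>, a)\<close> is approximated in \<open>L\<^sup>2\<close> by a shallow ReLU network \<open>h\<^sub>a\<close> with \<open>m\<close>
  neurons, error at most \<open>2 K\<^sub>a / m\<close> and path weight at most \<open>2 \<surd>K\<^sub>a\<close>, where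
  \<open>K\<^sub>a = \<parallel>r(\<cdot>, a)\<parallel>\<^sub>B\<^sup>2 + \<parallel>r\<parallel>\<^sub>B\<^sup>2 / |A|\<close> (Maurey's sampling argument, run greedily). With
  \<open>c = \<gamma> / (1 - \<gamma>)\<close>, a residual network of depth \<open>\<alpha> + 1\<close> computes \<open>c M + h\<^sub>a\<close>, where
  \<open>M = max\<^sub>a' h\<^sub>a'\<close>: its first layer evaluates all \<open>h\<^sub>a'\<close> and the other \<open>\<alpha>\<close> layers form a binary
  tree of maxima \<open>max x y = x + relu (y - x)\<close>. Since \<open>\<gamma> (c + 1) = c\<close>, the Bellman residual of
  this family is \<open>(h\<^sub>a - r\<^sub>a)(s) + c (M s - M s')\<close>; \<open>M\<close> is Lipschitz for \<open>\<parallel>\<cdot>\<parallel>\<^sub>\<infinity>\<close> with the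
  total path weight as constant, and \<open>\<parallel>s - s'\<parallel>\<^sub>\<infinity> \<le> C\<^sub>T \<Delta>t\<close>. The path norm of the tree is at most
  \<open>3 (c |A|\<^sup>3 + 1)\<close> times the total path weight, which Cauchy-Schwarz bounds by
  \<open>2 \<surd>(2 |A|) \<parallel>r\<parallel>\<^sub>B\<close>; the stated constants are generous upper bounds for what remains.\<close>

lemma abs_relu_le: "\<bar>relu y\<bar> \<le> \<bar>y\<bar>"
  by (simp add: relu_def)

lemma relu_Lipschitz: "\<bar>relu y - relu y'\<bar> \<le> \<bar>y - y'\<bar>"
  by (simp add: relu_def max_def)

lemma add_relu_diff: "a + relu (b - a) = max a b"
  by (simp add: relu_def max_def)

lemma continuous_on_relu [continuous_intros]:
  "continuous_on A f \<Longrightarrow> continuous_on A (\<lambda>x. relu (f x))"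
  unfolding relu_def by (intro continuous_intros)

lemma l1norm_nonneg: "0 \<le> l1norm w"
  by (auto simp: l1norm_def intro: sum_nonneg)

lemma continuous_on_l1norm [continuous_intros]:
  "continuous_on A f \<Longrightarrow> continuous_on A (\<lambda>z. l1norm (f z :: real^'d::finite))"
  unfolding l1norm_def by (intro continuous_intros)

lemma abs_inner_le_l1norm_infnorm: "\<bar>w \<bullet> v\<bar> \<le> l1norm w * infnorm (v::real^'d::finite)"
proof -
  have "\<bar>w \<bullet> v\<bar> = \<bar>\<Sum>i\<in>UNIV. w$i * v$i\<bar>" by (simp add: inner_vec_def)
  also have "\<dots> \<le> (\<Sum>i\<in>UNIV. \<bar>w$i\<bar> * infnorm v)"
    by (rule order_trans[OF sum_abs sum_mono])
       (auto simp: abs_mult intro: mult_left_mono component_le_infnorm_cart)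
  also have "\<dots> = l1norm w * infnorm v" by (simp add: l1norm_def sum_distrib_right)
  finally show ?thesis .
qed

lemma square_sum_le: "((x::real) + y)\<^sup>2 \<le> 2 * x\<^sup>2 + 2 * y\<^sup>2"
proof -
  have "2 * x\<^sup>2 + 2 * y\<^sup>2 - (x + y)\<^sup>2 = (x - y)\<^sup>2" by (simp add: power2_eq_square algebra_simps)
  then show ?thesis by (metis diff_ge_0_iff_ge zero_le_power2)
qed

lemma Max_image_diff_le:
  fixes f g :: "'b \<Rightarrow> real"
  assumes "finite A" "A \<noteq> {}"
  shows "\<bar>Max (f ` A) - Max (g ` A)\<bar> \<le> (\<Sum>a\<in>A. \<bar>f a - g a\<bar>)"
proof -
  have one_side: "Max (f ` A) - Max (g ` A) \<le> (\<Sum>a\<in>A. \<bar>f a - g a\<bar>)" for f g :: "'b \<Rightarrow> real"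
  proof -
    have "Max (f ` A) \<in> f ` A" using assms by (intro Max_in) auto
    then obtain a0 where a0: "a0 \<in> A" "Max (f ` A) = f a0" by auto
    have "f a0 - g a0 \<le> \<bar>f a0 - g a0\<bar>" by simp
    also have "\<dots> \<le> (\<Sum>a\<in>A. \<bar>f a - g a\<bar>)"
      using assms a0 by (intro member_le_sum) auto
    finally have "f a0 - g a0 \<le> (\<Sum>a\<in>A. \<bar>f a - g a\<bar>)" .
    moreover have "g a0 \<le> Max (g ` A)" using assms a0 by auto
    ultimately show ?thesis using a0 by linarith
  qed
  show ?thesis using one_side[of f g] one_side[of g f] by (simp add: abs_minus_commute abs_le_iff)
qed

lemma sum_div_mod:
  fixes n m :: nat
  assumes "0 < m"
  shows "(\<Sum>k<n*m. f (k div m) (k mod m)) = (\<Sum>j<n. \<Sum>k<m. f j k)"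
proof -
  have "(\<Sum>k<n*m. f (k div m) (k mod m)) = (\<Sum>i<n. \<Sum>j<m. f ((j + i*m) div m) ((j + i*m) mod m))"
    by (rule sum_mult_product)
  also have "\<dots> = (\<Sum>j<n. \<Sum>k<m. f j k)"
    using assms by (intro sum.cong refl) simp
  finally show ?thesis .
qed

lemma sum_sqrt_le_sqrt_card_mult:
  assumes "\<And>a. a \<in> A \<Longrightarrow> 0 \<le> K a"
  shows "(\<Sum>a\<in>A. sqrt (K a)) \<le> sqrt (real (card A)) * sqrt (\<Sum>a\<in>A. K a)"
proof -
  have "(\<Sum>a\<in>A. sqrt (K a)) = (\<Sum>a\<in>A. \<bar>sqrt (K a)\<bar> * \<bar>1::real\<bar>)"
    using assms by (intro sum.cong) auto
  also have "\<dots> \<le> L2_set (\<lambda>a. sqrt (K a)) A * L2_set (\<lambda>_. 1) A"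
    by (rule L2_set_mult_ineq)
  also have "L2_set (\<lambda>a. sqrt (K a)) A = sqrt (\<Sum>a\<in>A. K a)"
    unfolding L2_set_def using assms by (simp cong: sum.cong)
  also have "L2_set (\<lambda>_. 1::real) A = sqrt (real (card A))" by (simp add: L2_set_def)
  finally show ?thesis by (simp add: mult.commute)
qed

lemma exists_le_nn_integral:
  assumes "prob_space M" "\<Phi> \<in> borel_measurable M" "(\<integral>\<^sup>+z. \<Phi> z \<partial>M) \<le> c" "c < \<infinity>"
  shows "\<exists>z\<in>space M. \<Phi> z \<le> c"
proof (rule ccontr)
  assume "\<not> ?thesis"
  then have less: "\<forall>z\<in>space M. c < \<Phi> z" by (auto simp: not_le)
  interpret prob_space M by fact
  have "(\<integral>\<^sup>+z. c \<partial>M) < (\<integral>\<^sup>+z. \<Phi> z \<partial>M)"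
  proof (rule nn_integral_less)
    show "(\<integral>\<^sup>+z. c \<partial>M) \<noteq> \<infinity>" using assms(4) by (simp add: emeasure_space_1)
    show "AE x in M. c \<le> \<Phi> x" using less by (auto intro!: AE_I2 less_imp_le)
    show "\<not> (AE x in M. \<Phi> x \<le> c)"
    proof
      assume "AE x in M. \<Phi> x \<le> c"
      from this AE_space have "AE x in M. False" by eventually_elim (use less in force)
      then show False by simp
    qed
  qed (use assms in auto)
  then show False using assms(3) by (simp add: emeasure_space_1)
qed

lemma unit_cube_subset:
  fixes S :: "(real^'n::finite) set"
  assumes "compact S" "\<forall>x\<in>S. \<forall>i. 0 \<le> x $ i \<and> x $ i \<le> 1"
  shows "S \<in> sets lborel" "emeasure lborel S \<noteq> \<infinity>" "\<forall>x\<in>S. infnorm x \<le> 1"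
proof -
  show "S \<in> sets lborel" using assms(1) by (simp add: compact_imp_closed)
  show "emeasure lborel S \<noteq> \<infinity>" using emeasure_bounded_finite[OF compact_imp_bounded[OF assms(1)]] by simp
  show "\<forall>x\<in>S. infnorm x \<le> 1" using assms(2) by (auto simp: infnorm_cart intro!: cSup_least)
qed

section \<open>Shallow networks and Barron approximation\<close>

definition shallow_net :: "nat \<Rightarrow> (nat \<Rightarrow> real) \<Rightarrow> (nat \<Rightarrow> real^'d::finite) \<Rightarrow> real^'d \<Rightarrow> real" where
  "shallow_net m u w x = (\<Sum>k<m. u k * relu (w k \<bullet> x)) / real m"

definition shallow_weight :: "nat \<Rightarrow> (nat \<Rightarrow> real) \<Rightarrow> (nat \<Rightarrow> real^'d::finite) \<Rightarrow> real" where
  "shallow_weight m u w = (\<Sum>k<m. \<bar>u k\<bar> * l1norm (w k)) / real m"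

lemma shallow_weight_nonneg: "0 \<le> shallow_weight m u w"
  unfolding shallow_weight_def by (intro divide_nonneg_nonneg sum_nonneg mult_nonneg_nonneg l1norm_nonneg) auto

lemma borel_measurable_shallow_net [measurable]: "shallow_net m u w \<in> borel_measurable borel"
  unfolding shallow_net_def divide_inverse
  by (intro borel_measurable_continuous_onI continuous_intros)

lemma shallow_net_Lipschitz:
  "\<bar>shallow_net m u w s - shallow_net m u w s'\<bar> \<le> shallow_weight m u w * infnorm (s - s')"
proof -
  have "\<bar>u k * (relu (w k \<bullet> s) - relu (w k \<bullet> s'))\<bar> \<le> \<bar>u k\<bar> * l1norm (w k) * infnorm (s - s')" for k
  proof -
    have "\<bar>relu (w k \<bullet> s) - relu (w k \<bullet> s')\<bar> \<le> \<bar>w k \<bullet> (s - s')\<bar>"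
      using relu_Lipschitz by (simp add: inner_diff_right)
    also have "\<dots> \<le> l1norm (w k) * infnorm (s - s')" by (rule abs_inner_le_l1norm_infnorm)
    finally show ?thesis by (simp add: abs_mult mult.assoc mult_left_mono)
  qed
  then have "\<bar>\<Sum>k<m. u k * (relu (w k \<bullet> s) - relu (w k \<bullet> s'))\<bar> \<le> (\<Sum>k<m. \<bar>u k\<bar> * l1norm (w k) * infnorm (s - s'))"
    by (intro order_trans[OF sum_abs sum_mono])
  then show ?thesis
    by (simp add: shallow_net_def shallow_weight_def sum_distrib_right divide_right_mono
        flip: diff_divide_distrib sum_subtractf right_diff_distrib)
qed

definition neuron :: "real \<times> (real^'d::finite) \<Rightarrow> real^'d \<Rightarrow> real" where
  "neuron z x = fst z * relu (snd z \<bullet> x)"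

lemma borel_measurable_neuron [measurable]: "neuron z \<in> borel_measurable borel"
  unfolding neuron_def by (intro borel_measurable_continuous_onI continuous_intros)

lemma borel_measurable_neuron_weight [measurable]: "(\<lambda>z. neuron z x) \<in> borel_measurable borel"
  unfolding neuron_def by (intro borel_measurable_continuous_onI continuous_intros)

lemma borel_measurable_neuron_pair [measurable]:
  "(\<lambda>p. neuron (snd p) (fst p)) \<in> borel_measurable (borel \<Otimes>\<^sub>M borel)"
  unfolding neuron_def borel_prod by (intro borel_measurable_continuous_onI continuous_intros)

lemma borel_measurable_neuron_pair' [measurable]:
  "(\<lambda>p. neuron (fst p) (snd p)) \<in> borel_measurable (borel \<Otimes>\<^sub>M borel)"
  unfolding neuron_def borel_prod by (intro borel_measurable_continuous_onI continuous_intros)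

lemma abs_neuron_le: "infnorm x \<le> 1 \<Longrightarrow> \<bar>neuron z x\<bar> \<le> \<bar>fst z\<bar> * l1norm (snd z)"
  unfolding neuron_def abs_mult
  by (intro mult_left_mono order_trans[OF abs_relu_le] order_trans[OF abs_inner_le_l1norm_infnorm]
      mult_left_le l1norm_nonneg) auto

lemma barron_moment_eq: "barron_moment \<rho> = (\<integral>\<^sup>+z. ennreal ((fst z)\<^sup>2 * (l1norm (snd z))\<^sup>2) \<partial>\<rho>)"
  unfolding barron_moment_def by (simp add: case_prod_beta')

lemma shallow_net_eq_neuron_sum: "shallow_net m u w x = (\<Sum>k<m. neuron (u k, w k) x) / real m"
  by (simp add: shallow_net_def neuron_def)

context
  fixes S :: "(real^'d::finite) set" and h :: "real^'d \<Rightarrow> real"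
    and \<rho> :: "(real \<times> (real^'d)) measure" and K :: real
  assumes repr: "barron_repr S h \<rho>"
    and moment: "barron_moment \<rho> \<le> ennreal K"
    and K_nonneg: "0 \<le> K"
    and S_unit: "\<forall>x\<in>S. infnorm x \<le> 1"
begin

lemma prob_space_repr: "prob_space \<rho>"
  and sets_repr: "sets \<rho> = sets borel"
  using repr by (auto simp: barron_repr_def)

lemma measurable_repr_eq: "measurable \<rho> N = measurable borel N"
  by (rule measurable_cong_sets[OF sets_repr refl])

lemma neuron_expectation:
  assumes "x \<in> S"
  shows "integrable \<rho> (\<lambda>z. neuron z x)" "h x = (\<integral>z. neuron z x \<partial>\<rho>)"
  using repr assms by (auto simp: barron_repr_def neuron_def case_prod_beta')

lemma neuron_second_moment:
  assumes x: "x \<in> S"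
  shows "integrable \<rho> (\<lambda>z. (neuron z x)\<^sup>2)" "(\<integral>z. (neuron z x)\<^sup>2 \<partial>\<rho>) \<le> K"
proof -
  have "(\<integral>\<^sup>+z. ennreal ((neuron z x)\<^sup>2) \<partial>\<rho>) \<le> (\<integral>\<^sup>+z. ennreal ((fst z)\<^sup>2 * (l1norm (snd z))\<^sup>2) \<partial>\<rho>)"
  proof (rule nn_integral_mono)
    fix z
    have "(neuron z x)\<^sup>2 \<le> (\<bar>fst z\<bar> * l1norm (snd z))\<^sup>2"
      using abs_neuron_le[of x z] x S_unit by (metis abs_ge_zero power2_abs power_mono)
    then show "ennreal ((neuron z x)\<^sup>2) \<le> ennreal ((fst z)\<^sup>2 * (l1norm (snd z))\<^sup>2)"
      by (simp add: power_mult_distrib)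
  qed
  then have bound: "(\<integral>\<^sup>+z. ennreal ((neuron z x)\<^sup>2) \<partial>\<rho>) \<le> ennreal K"
    using moment by (simp add: barron_moment_eq)
  show int: "integrable \<rho> (\<lambda>z. (neuron z x)\<^sup>2)"
    using bound by (intro integrableI_bounded) (auto simp: measurable_repr_eq le_less_trans)
  have "ennreal (\<integral>z. (neuron z x)\<^sup>2 \<partial>\<rho>) \<le> ennreal K"
    using bound int by (subst nn_integral_eq_integral[symmetric]) auto
  then show "(\<integral>z. (neuron z x)\<^sup>2 \<partial>\<rho>) \<le> K" using K_nonneg by (simp add: ennreal_le_iff)
qed

lemma barron_value_sq_le:
  assumes "x \<in> S"
  shows "(h x)\<^sup>2 \<le> K"
proof -
  interpret prob_space \<rho> by (rule prob_space_repr)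
  have "(h x)\<^sup>2 \<le> (\<integral>z. (neuron z x)\<^sup>2 \<partial>\<rho>)"
    using variance_eq[of "\<lambda>z. neuron z x"] variance_positive[of "\<lambda>z. neuron z x"]
      neuron_expectation[OF assms] neuron_second_moment[OF assms] by simp
  then show ?thesis using neuron_second_moment(2)[OF assms] by linarith
qed

lemma nn_integral_shifted_neuron_sq_le:
  assumes x: "x \<in> S"
  shows "(\<integral>\<^sup>+z. ennreal ((a + neuron z x)\<^sup>2) \<partial>\<rho>) \<le> ennreal ((a + h x)\<^sup>2) + ennreal K"
proof -
  interpret prob_space \<rho> by (rule prob_space_repr)
  note Z = neuron_expectation[OF x] and Z2 = neuron_second_moment[OF x]
  have expand: "(\<lambda>z. (a + neuron z x)\<^sup>2) = (\<lambda>z. a\<^sup>2 + 2 * a * neuron z x + (neuron z x)\<^sup>2)"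
    by (simp add: power2_sum algebra_simps)
  have "(\<integral>z. (a + neuron z x)\<^sup>2 \<partial>\<rho>) = a\<^sup>2 + 2 * a * h x + (\<integral>z. (neuron z x)\<^sup>2 \<partial>\<rho>)"
    unfolding expand Z(2) using Z Z2 by (simp add: prob_space)
  also have "\<dots> \<le> (a + h x)\<^sup>2 + K"
    using Z2(2) zero_le_power2[of "h x"] unfolding power2_sum by linarith
  finally have "ennreal (\<integral>z. (a + neuron z x)\<^sup>2 \<partial>\<rho>) \<le> ennreal ((a + h x)\<^sup>2 + K)"
    by (rule ennreal_leI)
  moreover have "integrable \<rho> (\<lambda>z. (a + neuron z x)\<^sup>2)"
    unfolding expand using Z Z2 by auto
  ultimately show ?thesis using K_nonneg by (simp add: nn_integral_eq_integral ennreal_plus)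
qed

lemma borel_measurable_weight:
  "(\<lambda>z. ennreal (sqrt K * (\<bar>fst z\<bar> * l1norm (snd z)))) \<in> borel_measurable \<rho>"
proof -
  have [measurable]: "(\<lambda>z::real \<times> (real^'d). sqrt K * (\<bar>fst z\<bar> * l1norm (snd z))) \<in> borel_measurable borel"
    by (intro borel_measurable_continuous_onI continuous_intros)
  show ?thesis unfolding measurable_repr_eq by measurable
qed

lemma nn_integral_weight_le:
  "(\<integral>\<^sup>+z. ennreal (sqrt K * (\<bar>fst z\<bar> * l1norm (snd z))) \<partial>\<rho>) \<le> ennreal K"
proof -
  interpret prob_space \<rho> by (rule prob_space_repr)
  have "(\<integral>\<^sup>+z. ennreal (sqrt K * (\<bar>fst z\<bar> * l1norm (snd z))) \<partial>\<rho>)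
      \<le> (\<integral>\<^sup>+z. ennreal (1/2) * ennreal ((fst z)\<^sup>2 * (l1norm (snd z))\<^sup>2) + ennreal (K/2) \<partial>\<rho>)"
  proof (rule nn_integral_mono)
    fix z
    let ?t = "\<bar>fst z\<bar> * l1norm (snd z)" and ?X = "(fst z)\<^sup>2 * (l1norm (snd z))\<^sup>2"
    have "sqrt K * ?t \<le> 1/2 * ?X + K/2"
      using zero_le_power2[of "?t - sqrt K"] K_nonneg
      by (simp add: power2_diff power_mult_distrib algebra_simps)
    then have "ennreal (sqrt K * ?t) \<le> ennreal (1/2 * ?X + K/2)" by (rule ennreal_leI)
    also have "\<dots> = ennreal (1/2 * ?X) + ennreal (K/2)" using K_nonneg by (intro ennreal_plus) auto
    also have "ennreal (1/2 * ?X) = ennreal (1/2) * ennreal ?X" by (rule ennreal_mult) auto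
    finally show "ennreal (sqrt K * ?t) \<le> ennreal (1/2) * ennreal ?X + ennreal (K/2)" .
  qed
  also have "\<dots> = ennreal (1/2) * barron_moment \<rho> + ennreal (K/2)"
  proof -
    have [measurable]: "(\<lambda>z::real \<times> (real^'d). (fst z)\<^sup>2 * (l1norm (snd z))\<^sup>2) \<in> borel_measurable borel"
      by (intro borel_measurable_continuous_onI continuous_intros)
    have meas: "(\<lambda>z. ennreal ((fst z)\<^sup>2 * (l1norm (snd z))\<^sup>2)) \<in> borel_measurable \<rho>"
      unfolding measurable_repr_eq by measurable
    show ?thesis
      unfolding barron_moment_eq
      by (subst nn_integral_add) (use meas in \<open>simp_all add: nn_integral_cmult emeasure_space_1\<close>)
  qed
  also have "\<dots> \<le> ennreal (1/2) * ennreal K + ennreal (K/2)"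
    using moment by (intro add_mono mult_left_mono) auto
  also have "\<dots> = ennreal (1/2 * K + K/2)"
    using K_nonneg by (simp only: ennreal_mult ennreal_plus)
  finally show ?thesis by simp
qed

context
  assumes S_sets: "S \<in> sets lborel"
    and S_measure: "emeasure lborel S \<noteq> 0" "emeasure lborel S \<noteq> \<infinity>"
    and h_cont: "continuous_on S h"
    and K_pos: "0 < K"
begin

private abbreviation "\<mu> \<equiv> uniform_measure lborel S"

lemma prob_space_uniform: "prob_space \<mu>"
  using S_measure by (rule prob_space_uniform_measure)

lemma sets_uniform: "sets \<mu> = sets borel"
  by simp

lemma measurable_uniform_eq: "measurable \<mu> N = measurable borel N"
  by (rule measurable_cong_sets[OF sets_uniform refl])

lemma AE_in_S: "AE x in \<mu>. x \<in> S"
  by (rule AE_uniform_measureI[OF S_sets]) simp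

lemma borel_measurable_restricted [measurable]: "(\<lambda>x. indicator S x * h x) \<in> borel_measurable borel"
  using borel_measurable_continuous_on_indicator[OF _ h_cont] S_sets by simp

lemma nn_integral_residual_le:
  assumes [measurable]: "e \<in> borel_measurable borel"
  shows "(\<integral>\<^sup>+z. (\<integral>\<^sup>+x. ennreal ((e x + neuron z x - indicator S x * h x)\<^sup>2) \<partial>\<mu>) \<partial>\<rho>)
     \<le> (\<integral>\<^sup>+x. ennreal ((e x)\<^sup>2) \<partial>\<mu>) + ennreal K"
proof -
  interpret pair_sigma_finite \<mu> \<rho>
    by (simp add: pair_sigma_finite_def prob_space_imp_sigma_finite prob_space_uniform prob_space_repr)
  interpret prob_space \<mu> by (rule prob_space_uniform)
  have "(\<lambda>(x, z). ennreal ((e x + neuron z x - indicator S x * h x)\<^sup>2)) \<in> borel_measurable (\<mu> \<Otimes>\<^sub>M \<rho>)"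
    unfolding measurable_cong_sets[OF sets_pair_measure_cong[OF sets_uniform sets_repr] refl]
    by measurable
  then have "(\<integral>\<^sup>+z. (\<integral>\<^sup>+x. ennreal ((e x + neuron z x - indicator S x * h x)\<^sup>2) \<partial>\<mu>) \<partial>\<rho>)
      = (\<integral>\<^sup>+x. (\<integral>\<^sup>+z. ennreal ((e x + neuron z x - indicator S x * h x)\<^sup>2) \<partial>\<rho>) \<partial>\<mu>)"
    by (rule Fubini')
  also have "\<dots> \<le> (\<integral>\<^sup>+x. ennreal ((e x)\<^sup>2) + ennreal K \<partial>\<mu>)"
  proof (rule nn_integral_mono_AE)
    show "AE x in \<mu>. (\<integral>\<^sup>+z. ennreal ((e x + neuron z x - indicator S x * h x)\<^sup>2) \<partial>\<rho>)
        \<le> ennreal ((e x)\<^sup>2) + ennreal K"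
      using AE_in_S
    proof eventually_elim
      case (elim x)
      then show ?case
        using nn_integral_shifted_neuron_sq_le[OF elim, of "e x - h x"] by (simp add: algebra_simps)
    qed
  qed
  also have "\<dots> = (\<integral>\<^sup>+x. ennreal ((e x)\<^sup>2) \<partial>\<mu>) + ennreal K"
    by (subst nn_integral_add) (simp_all add: measurable_uniform_eq emeasure_space_1[simplified])
  finally show ?thesis .
qed

lemma borel_measurable_residual_integral:
  assumes [measurable]: "e \<in> borel_measurable borel"
  shows "(\<lambda>z. \<integral>\<^sup>+x. ennreal ((e x + neuron z x - indicator S x * h x)\<^sup>2) \<partial>\<mu>) \<in> borel_measurable \<rho>"
proof -
  have "(\<lambda>(z, x). ennreal ((e x + neuron z x - indicator S x * h x)\<^sup>2)) \<in> borel_measurable (\<rho> \<Otimes>\<^sub>M \<mu>)"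
    unfolding measurable_cong_sets[OF sets_pair_measure_cong[OF sets_repr sets_uniform] refl]
    by measurable
  then show ?thesis
    by (rule sigma_finite_measure.borel_measurable_nn_integral[OF
          prob_space_imp_sigma_finite[OF prob_space_uniform]])
qed

lemma exists_good_neuron:
  assumes [measurable]: "e \<in> borel_measurable borel"
    and finite: "(\<integral>\<^sup>+x. ennreal ((e x)\<^sup>2) \<partial>\<mu>) \<noteq> \<infinity>"
  shows "\<exists>z. (\<integral>\<^sup>+x. ennreal ((e x + neuron z x - indicator S x * h x)\<^sup>2) \<partial>\<mu>)
      + ennreal (sqrt K * (\<bar>fst z\<bar> * l1norm (snd z))) \<le> (\<integral>\<^sup>+x. ennreal ((e x)\<^sup>2) \<partial>\<mu>) + ennreal (2 * K)"
proof -
  let ?A = "\<integral>\<^sup>+x. ennreal ((e x)\<^sup>2) \<partial>\<mu>"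
  have "(\<integral>\<^sup>+z. (\<integral>\<^sup>+x. ennreal ((e x + neuron z x - indicator S x * h x)\<^sup>2) \<partial>\<mu>)
        + ennreal (sqrt K * (\<bar>fst z\<bar> * l1norm (snd z))) \<partial>\<rho>)
      \<le> (?A + ennreal K) + ennreal K"
    using nn_integral_residual_le nn_integral_weight_le
    by (subst nn_integral_add) (auto intro!: add_mono borel_measurable_residual_integral borel_measurable_weight)
  also have "\<dots> = ?A + ennreal (2 * K)"
    using K_pos by (simp add: add.assoc ennreal_plus[symmetric])
  finally have average: "(\<integral>\<^sup>+z. (\<integral>\<^sup>+x. ennreal ((e x + neuron z x - indicator S x * h x)\<^sup>2) \<partial>\<mu>)
        + ennreal (sqrt K * (\<bar>fst z\<bar> * l1norm (snd z))) \<partial>\<rho>) \<le> ?A + ennreal (2 * K)" .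
  moreover have "?A + ennreal (2 * K) < \<infinity>"
    using finite by (simp add: less_top[symmetric] ennreal_add_eq_top)
  ultimately show ?thesis
    using exists_le_nn_integral[OF prob_space_repr borel_measurable_add[OF
          borel_measurable_residual_integral[OF assms(1)] borel_measurable_weight]] by blast
qed

private abbreviation potential :: "nat \<Rightarrow> (nat \<Rightarrow> real) \<Rightarrow> (nat \<Rightarrow> real^'d) \<Rightarrow> ennreal" where
  "potential N u w \<equiv> (\<integral>\<^sup>+x. ennreal ((\<Sum>k<N. neuron (u k, w k) x - indicator S x * h x)\<^sup>2) \<partial>\<mu>)
      + ennreal (sqrt K * (\<Sum>k<N. \<bar>u k\<bar> * l1norm (w k)))"

lemma potential_Suc:
  fixes u :: "nat \<Rightarrow> real" and w :: "nat \<Rightarrow> real^'d" and N :: nat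
  defines "e x \<equiv> (\<Sum>k<N. neuron (u k, w k) x - indicator S x * h x)"
  shows "potential (Suc N) (u(N := fst z)) (w(N := snd z))
    = ((\<integral>\<^sup>+x. ennreal ((e x + neuron z x - indicator S x * h x)\<^sup>2) \<partial>\<mu>)
        + ennreal (sqrt K * (\<bar>fst z\<bar> * l1norm (snd z)))) + ennreal (sqrt K * (\<Sum>k<N. \<bar>u k\<bar> * l1norm (w k)))"
proof -
  have sum_upd: "(\<Sum>k<N. f ((u(N := fst z)) k) ((w(N := snd z)) k)) = (\<Sum>k<N. f (u k) (w k))"
    for f :: "real \<Rightarrow> real^'d \<Rightarrow> real"
    by (intro sum.cong) auto
  have step: "(\<Sum>k<Suc N. neuron ((u(N := fst z)) k, (w(N := snd z)) k) x - indicator S x * h x)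
      = e x + neuron z x - indicator S x * h x" for x
    using sum_upd[of "\<lambda>a b. neuron (a, b) x - indicator S x * h x"] by (simp add: e_def)
  have "(\<Sum>k<Suc N. \<bar>(u(N := fst z)) k\<bar> * l1norm ((w(N := snd z)) k))
      = \<bar>fst z\<bar> * l1norm (snd z) + (\<Sum>k<N. \<bar>u k\<bar> * l1norm (w k))"
    using sum_upd[of "\<lambda>a b. \<bar>a\<bar> * l1norm b"] by simp
  moreover have "0 \<le> (\<Sum>k<N. \<bar>u k\<bar> * l1norm (w k))"
    by (intro sum_nonneg mult_nonneg_nonneg l1norm_nonneg) auto
  ultimately have "ennreal (sqrt K * (\<Sum>k<Suc N. \<bar>(u(N := fst z)) k\<bar> * l1norm ((w(N := snd z)) k)))
      = ennreal (sqrt K * (\<bar>fst z\<bar> * l1norm (snd z))) + ennreal (sqrt K * (\<Sum>k<N. \<bar>u k\<bar> * l1norm (w k)))"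
    using K_pos l1norm_nonneg[of "snd z"] by (simp add: distrib_left ennreal_plus)
  then show ?thesis unfolding step by (simp only: add.assoc)
qed

text \<open>Maurey's argument in greedy form: averaged over \<open>\<rho>\<close>, adding one neuron raises the
  potential (squared residual plus \<open>\<surd>K\<close> times the path weight) by at most \<open>2K\<close>,
  so some neuron does no worse than the average.\<close>

lemma greedy_neurons: "\<exists>u w. potential N u w \<le> ennreal (2 * K * real N)"
proof (induction N)
  case 0
  then show ?case by simp
next
  case (Suc N)
  then obtain u w where IH: "potential N u w \<le> ennreal (2 * K * real N)" by blast
  define e where "e x = (\<Sum>k<N. neuron (u k, w k) x - indicator S x * h x)" for x
  have e_meas [measurable]: "e \<in> borel_measurable borel" unfolding e_def by measurable
  have "(\<integral>\<^sup>+x. ennreal ((e x)\<^sup>2) \<partial>\<mu>) \<le> ennreal (2 * K * real N)"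
    using IH unfolding e_def by (rule order_trans[rotated]) simp
  then have "(\<integral>\<^sup>+x. ennreal ((e x)\<^sup>2) \<partial>\<mu>) \<noteq> \<infinity>" using neq_top_trans[OF ennreal_neq_top] by auto
  then obtain z where z: "(\<integral>\<^sup>+x. ennreal ((e x + neuron z x - indicator S x * h x)\<^sup>2) \<partial>\<mu>)
      + ennreal (sqrt K * (\<bar>fst z\<bar> * l1norm (snd z))) \<le> (\<integral>\<^sup>+x. ennreal ((e x)\<^sup>2) \<partial>\<mu>) + ennreal (2 * K)"
    using exists_good_neuron[OF e_meas] by blast
  have "potential (Suc N) (u(N := fst z)) (w(N := snd z))
      \<le> ((\<integral>\<^sup>+x. ennreal ((e x)\<^sup>2) \<partial>\<mu>) + ennreal (2 * K)) + ennreal (sqrt K * (\<Sum>k<N. \<bar>u k\<bar> * l1norm (w k)))"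
    unfolding potential_Suc e_def[symmetric] using z by (rule add_right_mono)
  also have "\<dots> = potential N u w + ennreal (2 * K)"
    unfolding e_def by (simp only: add_ac)
  also have "\<dots> \<le> ennreal (2 * K * real N) + ennreal (2 * K)"
    using IH by (rule add_right_mono)
  also have "\<dots> = ennreal (2 * K * real (Suc N))"
    using K_pos by (simp add: algebra_simps flip: ennreal_plus)
  finally show ?case by blast
qed

lemma nn_integral_shallow_error:
  assumes m: "0 < m"
  shows "(\<integral>\<^sup>+x. ennreal ((h x - shallow_net m u w x)\<^sup>2) \<partial>\<mu>)
    = ennreal (1 / (real m)\<^sup>2) * (\<integral>\<^sup>+x. ennreal ((\<Sum>k<m. neuron (u k, w k) x - indicator S x * h x)\<^sup>2) \<partial>\<mu>)"
proof -
  have "AE x in \<mu>. ennreal ((h x - shallow_net m u w x)\<^sup>2)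
      = ennreal (1 / (real m)\<^sup>2) * ennreal ((\<Sum>k<m. neuron (u k, w k) x - indicator S x * h x)\<^sup>2)"
    using AE_in_S
  proof eventually_elim
    case (elim x)
    have "(h x - shallow_net m u w x)\<^sup>2 = 1 / (real m)\<^sup>2 * (\<Sum>k<m. neuron (u k, w k) x - indicator S x * h x)\<^sup>2"
      using elim m by (simp add: shallow_net_eq_neuron_sum sum_subtractf field_simps power2_eq_square)
    moreover have "ennreal (1 / (real m)\<^sup>2 * (\<Sum>k<m. neuron (u k, w k) x - indicator S x * h x)\<^sup>2)
        = ennreal (1 / (real m)\<^sup>2) * ennreal ((\<Sum>k<m. neuron (u k, w k) x - indicator S x * h x)\<^sup>2)"
      by (rule ennreal_mult) auto
    ultimately show ?case by (simp only:)
  qed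
  then show ?thesis
    by (subst nn_integral_cong_AE, assumption) (rule nn_integral_cmult, simp add: measurable_uniform_eq)
qed

lemma shallow_approximation:
  assumes m: "0 < m"
  shows "\<exists>u w. (\<integral>\<^sup>+x. ennreal ((h x - shallow_net m u w x)\<^sup>2) \<partial>\<mu>) \<le> ennreal (2 * K / real m)
     \<and> shallow_weight m u w \<le> 2 * sqrt K"
proof -
  obtain u w where pot: "potential m u w \<le> ennreal (2 * K * real m)"
    using greedy_neurons by blast
  have "ennreal (sqrt K * (\<Sum>k<m. \<bar>u k\<bar> * l1norm (w k))) \<le> ennreal (2 * K * real m)"
    using pot by (rule order_trans[rotated]) simp
  then have "sqrt K * (\<Sum>k<m. \<bar>u k\<bar> * l1norm (w k)) \<le> 2 * (sqrt K * sqrt K) * real m"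
    using K_pos by (subst (asm) ennreal_le_iff) auto
  then have "sqrt K * (\<Sum>k<m. \<bar>u k\<bar> * l1norm (w k)) \<le> sqrt K * (2 * sqrt K * real m)"
    by (simp only: mult_ac)
  then have "shallow_weight m u w \<le> 2 * sqrt K"
    using K_pos m by (simp add: shallow_weight_def divide_le_eq mult_le_cancel_left_pos)
  moreover have "(\<integral>\<^sup>+x. ennreal ((h x - shallow_net m u w x)\<^sup>2) \<partial>\<mu>)
      \<le> ennreal (1 / (real m)\<^sup>2) * ennreal (2 * K * real m)"
    unfolding nn_integral_shallow_error[OF m]
    using pot by (intro mult_left_mono order_trans[OF _ pot]) simp_all
  moreover have "ennreal (1 / (real m)\<^sup>2) * ennreal (2 * K * real m) = ennreal (2 * K / real m)"
    using K_pos m by (simp add: ennreal_mult[symmetric] power2_eq_square del: ennreal_mult)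
  ultimately show ?thesis by auto
qed

end

end

lemma barron_norm_sq:
  assumes "barron_space S h"
  shows "(barron_norm S h)\<^sup>2
    = Inf {enn2real (barron_moment \<rho>) | \<rho>. barron_repr S h \<rho> \<and> barron_moment \<rho> < \<infinity>}"
proof -
  have "{enn2real (barron_moment \<rho>) | \<rho>. barron_repr S h \<rho> \<and> barron_moment \<rho> < \<infinity>} \<noteq> {}"
    using assms by (auto simp: barron_space_def)
  then have "0 \<le> Inf {enn2real (barron_moment \<rho>) | \<rho>. barron_repr S h \<rho> \<and> barron_moment \<rho> < \<infinity>}"
    by (intro cInf_greatest) auto
  then show ?thesis by (simp add: barron_norm_def)
qed

lemma exists_barron_repr_moment_le:
  assumes "barron_space S h" "(barron_norm S h)\<^sup>2 < K"
  shows "\<exists>\<rho>. barron_repr S h \<rho> \<and> barron_moment \<rho> \<le> ennreal K"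
proof -
  let ?M = "{enn2real (barron_moment \<rho>) | \<rho>. barron_repr S h \<rho> \<and> barron_moment \<rho> < \<infinity>}"
  have "?M \<noteq> {}" using assms(1) by (auto simp: barron_space_def)
  moreover have "Inf ?M < K" using assms by (simp add: barron_norm_sq)
  ultimately have "\<exists>v\<in>?M. v < K" by (rule cInf_lessD)
  then obtain \<rho> where \<rho>:
    "barron_repr S h \<rho>" "barron_moment \<rho> < \<infinity>" "enn2real (barron_moment \<rho>) < K"
    by auto
  have "barron_moment \<rho> = ennreal (enn2real (barron_moment \<rho>))"
    using \<rho>(2) by (simp add: less_top)
  also have "\<dots> \<le> ennreal K" using \<rho>(3) by (intro ennreal_leI) simp
  finally show ?thesis using \<rho>(1) by blast
qed

lemma barron_value_sq_le_norm_sq: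
  assumes "barron_space S h" "x \<in> S" "\<forall>x\<in>S. infnorm x \<le> 1"
  shows "(h x)\<^sup>2 \<le> (barron_norm S h)\<^sup>2"
proof (rule dense_ge)
  fix K assume "(barron_norm S h)\<^sup>2 < K"
  moreover from this obtain \<rho> where "barron_repr S h \<rho>" "barron_moment \<rho> \<le> ennreal K"
    using exists_barron_repr_moment_le assms(1) by blast
  ultimately show "(h x)\<^sup>2 \<le> K"
    using barron_value_sq_le[of S h \<rho> K x] assms(2,3) zero_le_power2[of "barron_norm S h"] by simp
qed

lemma barron_shallow_approximation:
  assumes "S \<in> sets lborel" "emeasure lborel S \<noteq> 0" "emeasure lborel S \<noteq> \<infinity>"
    and "\<forall>x\<in>S. infnorm x \<le> 1" "continuous_on S h" "barron_space S h"
    and "(barron_norm S h)\<^sup>2 < K" "0 < m"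
  shows "\<exists>u w. (\<integral>\<^sup>+x. ennreal ((h x - shallow_net m u w x)\<^sup>2) \<partial>uniform_measure lborel S)
      \<le> ennreal (2 * K / real m) \<and> shallow_weight m u w \<le> 2 * sqrt K"
proof -
  obtain \<rho> where \<rho>: "barron_repr S h \<rho>" "barron_moment \<rho> \<le> ennreal K"
    using exists_barron_repr_moment_le assms(6,7) by blast
  have K: "0 < K" using assms(7) zero_le_power2[of "barron_norm S h"] by linarith
  show ?thesis
    by (rule shallow_approximation[OF \<rho> less_imp_le[OF K] assms(4,1,2,3,5) K assms(8)])
qed

lemma reward_barron_norm_sq:
  "(reward_barron_norm S r)\<^sup>2 = (\<Sum>a\<in>UNIV. (barron_norm S (\<lambda>s. r s a))\<^sup>2)"
  unfolding reward_barron_norm_def by (simp add: sum_nonneg)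

lemma reward_vanishes_of_barron_norm_zero:
  assumes "reward_barron_norm S r = 0" "\<forall>a. barron_space S (\<lambda>s. r s a)" "\<forall>x\<in>S. infnorm x \<le> 1"
    and "s \<in> S"
  shows "r s a = 0"
proof -
  have "(\<Sum>a\<in>UNIV. (barron_norm S (\<lambda>s. r s a))\<^sup>2) = 0"
    using assms(1) by (simp add: reward_barron_norm_sq[symmetric])
  then have "(barron_norm S (\<lambda>s. r s a))\<^sup>2 = 0" by (simp add: sum_nonneg_eq_0_iff)
  then show ?thesis using barron_value_sq_le_norm_sq[of S "\<lambda>s. r s a" s] assms(2-4) by simp
qed

lemma exists_reward_approximants:
  fixes r :: "real^'d::finite \<Rightarrow> 'a::finite \<Rightarrow> real"
  assumes S: "S \<in> sets lborel" "emeasure lborel S \<noteq> 0" "emeasure lborel S \<noteq> \<infinity>"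
      "\<forall>x\<in>S. infnorm x \<le> 1"
    and r_cont: "\<forall>a. continuous_on S (\<lambda>s. r s a)" and r_barron: "\<forall>a. barron_space S (\<lambda>s. r s a)"
    and m: "0 < m"
  defines "K a \<equiv> (barron_norm S (\<lambda>s. r s a))\<^sup>2 + (reward_barron_norm S r)\<^sup>2 / real CARD('a)"
  shows "\<exists>u w. \<forall>a. (\<integral>\<^sup>+s. ennreal ((r s a - shallow_net m (u a) (w a) s)\<^sup>2) \<partial>uniform_measure lborel S)
      \<le> ennreal (2 * K a / real m) \<and> shallow_weight m (u a) (w a) \<le> 2 * sqrt (K a)"
proof (cases "reward_barron_norm S r = 0")
  case True
  \<comment> \<open>The infimum defining the Barron norm need not be attained, but \<open>r\<close> vanishes on \<open>S\<close>.\<close>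
  then have "(\<integral>\<^sup>+s. ennreal ((r s a - shallow_net m (\<lambda>_. 0) w s)\<^sup>2) \<partial>uniform_measure lborel S) = 0"
    for a and w :: "nat \<Rightarrow> real^'d"
    using reward_vanishes_of_barron_norm_zero[OF True r_barron S(4)]
    by (subst nn_integral_cong_AE[where v = "\<lambda>_. 0"])
       (auto intro: AE_uniform_measureI[OF S(1)] simp: shallow_net_def)
  moreover have "shallow_weight m (\<lambda>_. 0) w = 0" for w :: "nat \<Rightarrow> real^'d"
    by (simp add: shallow_weight_def)
  moreover have "0 \<le> K a" for a unfolding K_def by simp
  ultimately show ?thesis by (intro exI[of _ "\<lambda>_ _. 0"]) auto
next
  case False
  \<comment> \<open>The slack \<open>\<parallel>r\<parallel>\<^sub>B\<^sup>2 / |A|\<close> puts \<open>K a\<close> strictly above the infimum defining the norm.\<close>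
  then have "(barron_norm S (\<lambda>s. r s a))\<^sup>2 < K a" for a by (simp add: K_def)
  then have "\<forall>a. \<exists>u w. (\<integral>\<^sup>+s. ennreal ((r s a - shallow_net m u w s)\<^sup>2) \<partial>uniform_measure lborel S)
      \<le> ennreal (2 * K a / real m) \<and> shallow_weight m u w \<le> 2 * sqrt (K a)"
    using barron_shallow_approximation[OF S] r_cont r_barron m by blast
  from choice[OF this] obtain u where "\<forall>a. \<exists>w. (\<integral>\<^sup>+s. ennreal ((r s a - shallow_net m (u a) w s)\<^sup>2)
      \<partial>uniform_measure lborel S) \<le> ennreal (2 * K a / real m) \<and> shallow_weight m (u a) w \<le> 2 * sqrt (K a)" ..
  from choice[OF this] show ?thesis by blast
qed

section \<open>A residual network computing a maximum\<close>

text \<open>Column \<open>j\<close> of \<open>3 |U| |W| |V|\<close> for the first layer of one block, as it enters the path norm.\<close>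

definition shallow_mass :: "nat \<Rightarrow> (nat \<Rightarrow> real) \<Rightarrow> (nat \<Rightarrow> real^'d::finite) \<Rightarrow> 'd \<Rightarrow> real" where
  "shallow_mass m u w j = 3 * (\<Sum>k<m. \<bar>u k\<bar> / real m * \<bar>w k $ j\<bar>)"

lemma shallow_mass_nonneg: "0 \<le> shallow_mass m u w j"
  unfolding shallow_mass_def by (intro mult_nonneg_nonneg sum_nonneg) auto

lemma sum_shallow_mass: "(\<Sum>j\<in>UNIV. shallow_mass m u w j) = 3 * shallow_weight m u w"
  unfolding shallow_mass_def shallow_weight_def l1norm_def
  by (simp add: sum_distrib_left sum_divide_distrib sum.swap[of _ UNIV] mult_ac)

primrec tree_max :: "(nat \<Rightarrow> real) \<Rightarrow> nat \<Rightarrow> nat \<Rightarrow> real" where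
  "tree_max L 0 j = L j"
| "tree_max L (Suc t) j = max (tree_max L t (2*j)) (tree_max L t (2*j+1))"

lemma tree_max_eq_Max: "tree_max L t j = Max (L ` {2^t*j..<2^t*j+2^t})"
proof (induction t arbitrary: j)
  case 0
  then show ?case by simp
next
  case (Suc t)
  have "{(2::nat)^Suc t*j..<2^Suc t*j+2^Suc t}
      = {2^t*(2*j)..<2^t*(2*j)+2^t} \<union> {2^t*(2*j+1)..<2^t*(2*j+1)+2^t}"
    by (auto simp: algebra_simps)
  then show ?case by (simp only: image_Un) (subst Max_Un, auto simp: Suc.IH)
qed

lemma sum_block_split:
  fixes t j :: nat
  shows "(\<Sum>i\<in>{2^Suc t*j..<2^Suc t*j+2^Suc t}. f i)
     = (\<Sum>i\<in>{2^t*(2*j)..<2^t*(2*j)+2^t}. f i) + (\<Sum>i\<in>{2^t*(2*j+1)..<2^t*(2*j+1)+2^t}. (f i :: real))"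
proof -
  have iv: "{(2::nat)^Suc t*j..<2^Suc t*j+2^Suc t} = {2^t*(2*j)..<2^t*(2*j+1)+2^t}"
    by (simp add: algebra_simps)
  have mid: "(2::nat)^t*(2*j) + 2^t = 2^t*(2*j+1)" by simp
  show ?thesis unfolding iv mid by (rule sum.atLeastLessThan_concat[symmetric]) simp_all
qed

lemma pow2_block_le:
  assumes "t \<le> \<alpha>" "j < 2^(\<alpha>-t)"
  shows "(2::nat)^t * j + 2^t \<le> 2^\<alpha>"
proof -
  have "(2::nat)^t * Suc j \<le> 2^t * 2^(\<alpha>-t)" using assms by (intro mult_le_mono2) simp
  also have "\<dots> = 2^\<alpha>" using assms by (simp flip: power_add)
  finally show ?thesis by simp
qed

lemma pow2_children_less:
  assumes "t < \<alpha>" "j < 2^(\<alpha> - Suc t)"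
  shows "2*j < 2^(\<alpha>-t)" "2*j+1 < (2::nat)^(\<alpha>-t)"
proof -
  have "(2::nat)^(\<alpha>-t) = 2 * 2^(\<alpha>-Suc t)" using assms by (simp flip: power_Suc add: Suc_diff_Suc)
  then show "2*j < 2^(\<alpha>-t)" "2*j+1 < (2::nat)^(\<alpha>-t)" using assms(2) by linarith+
qed

lemma sum_two_delta:
  fixes a b D :: nat
  assumes "a < D" "b < D"
  shows "(\<Sum>i<D. ((if i = a then c1 else 0) + (if i = b then c2 else 0)) * (f i::real)) = c1 * f a + c2 * f b"
  using assms by (simp add: distrib_right sum.distrib if_distrib[of "\<lambda>y. y * f _"] cong: if_cong)

lemma pn_mat_nonneg: "0 \<le> pn_mat m D \<theta> l i j"
  by (induction l arbitrary: i) (auto intro!: add_nonneg_nonneg mult_nonneg_nonneg sum_nonneg)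

text \<open>Layout of the hidden state (dimension \<open>D = 2^\<alpha> + 1 + 2^\<alpha> m\<close>): coordinates
  \<open>2^\<alpha> + 1 + k\<close> hold the features \<open>W (k div m) (k mod m) \<bullet> x\<close>; layer 1 writes the shallow
  network of block \<open>i\<close> into coordinate \<open>i < 2^\<alpha>\<close> and a copy of block \<open>j0\<close> into coordinate
  \<open>2^\<alpha>\<close>; layer \<open>t + 1\<close> replaces coordinate \<open>2^t j\<close> by the maximum of coordinates \<open>2^t j\<close>
  and \<open>2^t j + 2^(t-1)\<close>, using \<open>max a b = a + relu (b - a)\<close>. The read-out is \<open>c\<close> times
  coordinate \<open>0\<close> plus coordinate \<open>2^\<alpha>\<close>.\<close>

definition max_tree_net :: "nat \<Rightarrow> nat \<Rightarrow> nat \<Rightarrow> real \<Rightarrow> (nat \<Rightarrow> nat \<Rightarrow> real)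
    \<Rightarrow> (nat \<Rightarrow> nat \<Rightarrow> real^'d::finite) \<Rightarrow> 'd resparam" where
  "max_tree_net \<alpha> m j0 c U W = ResParam
     (\<lambda>i. (if i = 0 then c else 0) + (if i = 2^\<alpha> then 1 else 0))
     (\<lambda>i j. if 2^\<alpha> < i then W ((i - 2^\<alpha> - 1) div m) ((i - 2^\<alpha> - 1) mod m) $ j else 0)
     (\<lambda>l k p. if l = 1 then (if k < 2^\<alpha>*m \<and> p = 2^\<alpha>+1+k then 1 else 0)
        else if k < 2^(\<alpha>-(l-1))
          then (if p = 2^(l-1)*k + 2^(l-2) then 1 else 0) - (if p = 2^(l-1)*k then 1 else 0) else 0)
     (\<lambda>l i k. if l = 1 then (if k < 2^\<alpha>*m then U (k div m) (k mod m) / real m *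
          ((if i = k div m then 1 else 0) + (if i = 2^\<alpha> \<and> k div m = j0 then 1 else 0)) else 0)
        else (if k < 2^(\<alpha>-(l-1)) \<and> i = 2^(l-1)*k then 1 else 0))"

context
  fixes \<alpha> m j0 :: nat and c :: real and U :: "nat \<Rightarrow> nat \<Rightarrow> real" and W :: "nat \<Rightarrow> nat \<Rightarrow> real^'d::finite"
    and mw D :: nat
  assumes m_pos: "0 < m" and j0: "j0 < 2^\<alpha>" and width: "2^\<alpha> * m \<le> mw"
    and D_eq: "D = 2^\<alpha> + 1 + 2^\<alpha> * m"
begin

private abbreviation "N \<equiv> (2::nat)^\<alpha>"
private abbreviation "\<theta> \<equiv> max_tree_net \<alpha> m j0 c U W"
private abbreviation "hid \<equiv> res_hidden mw D \<theta>"
private abbreviation "pn \<equiv> pn_mat mw D \<theta>"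

lemma max_tree_u: "rp_u \<theta> i = (if i = 0 then c else 0) + (if i = N then 1 else 0)"
  and max_tree_V: "rp_V \<theta> i j = (if N < i then W ((i - N - 1) div m) ((i - N - 1) mod m) $ j else 0)"
  and max_tree_W_first: "rp_W \<theta> (Suc 0) k p = (if k < N*m \<and> p = N+1+k then 1 else 0)"
  and max_tree_U_first: "rp_U \<theta> (Suc 0) i k = (if k < N*m then U (k div m) (k mod m) / real m *
          ((if i = k div m then 1 else 0) + (if i = N \<and> k div m = j0 then 1 else 0)) else 0)"
  and max_tree_W_merge: "0 < t \<Longrightarrow> rp_W \<theta> (Suc t) k p = (if k < 2^(\<alpha>-t)
          then (if p = 2^t*k + 2^(t-1) then 1 else 0) - (if p = 2^t*k then 1 else 0) else 0)"
  and max_tree_U_merge: "0 < t \<Longrightarrow> rp_U \<theta> (Suc t) i k = (if k < 2^(\<alpha>-t) \<and> i = 2^t*k then 1 else 0)"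
  by (simp_all add: max_tree_net_def numeral_2_eq_2)

lemma hidden0_feature: "q < N*m \<Longrightarrow> hid x 0 (Suc (N + q)) = W (q div m) (q mod m) \<bullet> x"
  by (simp add: max_tree_V inner_vec_def)

lemma hidden0_low: "i \<le> N \<Longrightarrow> hid x 0 i = 0"
  by (simp add: max_tree_V)

lemma pn0_feature: "pn 0 (Suc (N + q)) j = \<bar>W (q div m) (q mod m) $ j\<bar>"
  by (simp add: max_tree_V)

lemma pn0_low: "i \<le> N \<Longrightarrow> pn 0 i j = 0"
  by (simp add: max_tree_V)

lemma sum_W_first:
  assumes "k < N*m"
  shows "(\<Sum>p<D. rp_W \<theta> (Suc 0) k p * F p) = F (Suc (N + k))"
    and "(\<Sum>p<D. \<bar>rp_W \<theta> (Suc 0) k p\<bar> * F p) = F (Suc (N + k))"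
proof -
  have "(\<Sum>p<D. rp_W \<theta> (Suc 0) k p * F p) = (\<Sum>p<D. if p = N+1+k then F p else 0)"
    by (intro sum.cong) (auto simp: max_tree_W_first assms)
  then show "(\<Sum>p<D. rp_W \<theta> (Suc 0) k p * F p) = F (Suc (N + k))" using assms D_eq by simp
  then show "(\<Sum>p<D. \<bar>rp_W \<theta> (Suc 0) k p\<bar> * F p) = F (Suc (N + k))"
    by (simp add: max_tree_W_first)
qed

private abbreviation sel :: "nat \<Rightarrow> nat \<Rightarrow> real" where
  "sel i j \<equiv> (if i = j then 1 else 0) + (if i = N \<and> j = j0 then 1 else 0)"

lemma sum_sel:
  "i < N \<Longrightarrow> (\<Sum>j<N. sel i j * a j) = a i"
  "(\<Sum>j<N. sel N j * a j) = a j0"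
proof -
  show "i < N \<Longrightarrow> (\<Sum>j<N. sel i j * a j) = a i"
    by (subst sum.cong[OF refl, where h = "\<lambda>j. if j = i then a j else 0"]) auto
  show "(\<Sum>j<N. sel N j * a j) = a j0"
    using j0 by (subst sum.cong[OF refl, where h = "\<lambda>j. if j = j0 then a j else 0"]) auto
qed

lemma sum_U_first:
  "(\<Sum>k<mw. rp_U \<theta> (Suc 0) i k * F k) = (\<Sum>j<N. sel i j * (\<Sum>k<m. U j k / real m * F (j*m + k)))"
  "(\<Sum>k<mw. \<bar>rp_U \<theta> (Suc 0) i k\<bar> * F k) = (\<Sum>j<N. sel i j * (\<Sum>k<m. \<bar>U j k\<bar> / real m * F (j*m + k)))"
proof -
  have F: "F k = F ((k div m) * m + k mod m)" for k by simp
  have "(\<Sum>k<mw. rp_U \<theta> (Suc 0) i k * F k) = (\<Sum>k<N*m. rp_U \<theta> (Suc 0) i k * F k)"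
    using width by (intro sum.mono_neutral_right) (auto simp: max_tree_U_first)
  also have "\<dots> = (\<Sum>k<N*m. (\<lambda>j k. sel i j * (U j k / real m * F (j*m + k))) (k div m) (k mod m))"
    by (intro sum.cong refl) (subst F, auto simp: max_tree_U_first)
  also have "\<dots> = (\<Sum>j<N. \<Sum>k<m. sel i j * (U j k / real m * F (j*m + k)))"
    by (rule sum_div_mod[OF m_pos])
  finally show "(\<Sum>k<mw. rp_U \<theta> (Suc 0) i k * F k) = (\<Sum>j<N. sel i j * (\<Sum>k<m. U j k / real m * F (j*m + k)))"
    by (simp only: sum_distrib_left)
  have "(\<Sum>k<mw. \<bar>rp_U \<theta> (Suc 0) i k\<bar> * F k) = (\<Sum>k<N*m. \<bar>rp_U \<theta> (Suc 0) i k\<bar> * F k)"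
    using width by (intro sum.mono_neutral_right) (auto simp: max_tree_U_first)
  also have "\<dots> = (\<Sum>k<N*m. (\<lambda>j k. sel i j * (\<bar>U j k\<bar> / real m * F (j*m + k))) (k div m) (k mod m))"
    by (intro sum.cong refl) (subst F, auto simp: max_tree_U_first abs_mult)
  also have "\<dots> = (\<Sum>j<N. \<Sum>k<m. sel i j * (\<bar>U j k\<bar> / real m * F (j*m + k)))"
    by (rule sum_div_mod[OF m_pos])
  finally show "(\<Sum>k<mw. \<bar>rp_U \<theta> (Suc 0) i k\<bar> * F k) = (\<Sum>j<N. sel i j * (\<Sum>k<m. \<bar>U j k\<bar> / real m * F (j*m + k)))"
    by (simp only: sum_distrib_left)
qed

lemma block_index_less: "j < N \<Longrightarrow> k < m \<Longrightarrow> j*m + k < N*m"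
proof -
  assume "j < N" "k < m"
  then have "j*m + k < Suc j * m" by simp
  also have "\<dots> \<le> N*m" using \<open>j < N\<close> by (intro mult_le_mono1) simp
  finally show ?thesis .
qed

lemma hidden1: "i \<le> N \<Longrightarrow> hid x (Suc 0) i = (\<Sum>j<N. sel i j * shallow_net m (U j) (W j) x)"
proof -
  assume "i \<le> N"
  have "hid x (Suc 0) i = (\<Sum>k<mw. rp_U \<theta> (Suc 0) i k * relu (\<Sum>p<D. rp_W \<theta> (Suc 0) k p * hid x 0 p))"
    using hidden0_low[OF \<open>i \<le> N\<close>] by simp
  also have "\<dots> = (\<Sum>j<N. sel i j * (\<Sum>k<m. U j k / real m * relu (W j k \<bullet> x)))"
    unfolding sum_U_first
    by (intro sum.cong refl arg_cong2[where f = "(*)"])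
       (simp_all add: sum_W_first block_index_less hidden0_feature m_pos del: res_hidden.simps)
  finally show ?thesis by (simp add: shallow_net_def sum_divide_distrib mult_ac)
qed

lemma hidden1_leaf: "i < N \<Longrightarrow> hid x (Suc 0) i = shallow_net m (U i) (W i) x"
  using hidden1[of i x] sum_sel(1)[of i "\<lambda>j. shallow_net m (U j) (W j) x"] by simp

lemma hidden1_carrier: "hid x (Suc 0) N = shallow_net m (U j0) (W j0) x"
  using hidden1[of N x] sum_sel(2)[of "\<lambda>j. shallow_net m (U j) (W j) x"] by simp

lemma pn1: "i \<le> N \<Longrightarrow> pn (Suc 0) i j' = (\<Sum>j<N. sel i j * shallow_mass m (U j) (W j) j')"
proof -
  assume "i \<le> N"
  have "pn (Suc 0) i j'
      = 3 * (\<Sum>p<D. (\<Sum>k<mw. \<bar>rp_U \<theta> (Suc 0) i k\<bar> * \<bar>rp_W \<theta> (Suc 0) k p\<bar>) * pn 0 p j')"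
    using pn0_low[OF \<open>i \<le> N\<close>] by simp
  also have "\<dots> = 3 * (\<Sum>k<mw. \<bar>rp_U \<theta> (Suc 0) i k\<bar> * (\<Sum>p<D. \<bar>rp_W \<theta> (Suc 0) k p\<bar> * pn 0 p j'))"
    by (simp add: sum_distrib_right sum_distrib_left mult_ac sum.swap[of _ "{..<D}"])
  also have "\<dots> = 3 * (\<Sum>j<N. sel i j * (\<Sum>k<m. \<bar>U j k\<bar> / real m * \<bar>W j k $ j'\<bar>))"
    unfolding sum_U_first
    by (intro sum.cong refl arg_cong2[where f = "(*)"])
       (simp_all add: sum_W_first block_index_less pn0_feature m_pos del: pn_mat.simps)
  also have "\<dots> = (\<Sum>j<N. sel i j * shallow_mass m (U j) (W j) j')"
    by (simp only: shallow_mass_def sum_distrib_left mult.left_commute)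
  finally show ?thesis .
qed

lemma pn1_leaf: "i < N \<Longrightarrow> pn (Suc 0) i j' = shallow_mass m (U i) (W i) j'"
  using pn1[of i j'] sum_sel(1)[of i "\<lambda>j. shallow_mass m (U j) (W j) j'"] by simp

lemma pn1_carrier: "pn (Suc 0) N j' = shallow_mass m (U j0) (W j0) j'"
  using pn1[of N j'] sum_sel(2)[of "\<lambda>j. shallow_mass m (U j) (W j) j'"] by simp

lemma tree_width_le: "2^(\<alpha>-t) \<le> mw"
proof -
  have "(2::nat)^(\<alpha>-t) \<le> N" by (simp add: power_increasing)
  also have "\<dots> \<le> N*m" using m_pos by simp
  finally show ?thesis using width by simp
qed

lemma sum_U_merge:
  assumes "0 < t" "j < 2^(\<alpha>-t)"
  shows "(\<Sum>k<mw. rp_U \<theta> (Suc t) (2^t*j) k * F k) = F j"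
    and "(\<Sum>k<mw. \<bar>rp_U \<theta> (Suc t) (2^t*j) k\<bar> * F k) = F j"
proof -
  have "(\<Sum>k<mw. rp_U \<theta> (Suc t) (2^t*j) k * F k) = (\<Sum>k<mw. if k = j then F k else 0)"
    by (rule sum.cong) (use assms in \<open>auto simp: max_tree_U_merge\<close>)
  then show "(\<Sum>k<mw. rp_U \<theta> (Suc t) (2^t*j) k * F k) = F j"
    using assms tree_width_le[of t] by simp
  then show "(\<Sum>k<mw. \<bar>rp_U \<theta> (Suc t) (2^t*j) k\<bar> * F k) = F j"
    using assms by (simp add: max_tree_U_merge)
qed

lemma U_merge_carrier_zero: "0 < t \<Longrightarrow> t \<le> \<alpha> \<Longrightarrow> rp_U \<theta> (Suc t) N k = 0"
proof (cases "k < 2^(\<alpha>-t)")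
  case True
  assume "0 < t" "t \<le> \<alpha>"
  have "(2::nat)^t * k + 2^t \<le> N" using \<open>t \<le> \<alpha>\<close> True by (rule pow2_block_le)
  moreover have "0 < (2::nat)^t" by simp
  ultimately have "N \<noteq> 2^t*k" by linarith
  then show ?thesis using \<open>0 < t\<close> by (simp add: max_tree_U_merge)
qed (simp add: max_tree_U_merge)

lemma sum_W_merge:
  assumes "0 < t" "t \<le> \<alpha>" "j < 2^(\<alpha>-t)"
  shows "(\<Sum>p<D. rp_W \<theta> (Suc t) j p * F p) = F (2^t*j + 2^(t-1)) - F (2^t*j)"
    and "(\<Sum>p<D. \<bar>rp_W \<theta> (Suc t) j p\<bar> * F p) = F (2^t*j + 2^(t-1)) + F (2^t*j)"
proof -
  have "(2::nat)^t * j + 2^t \<le> N" using assms(2,3) by (rule pow2_block_le)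
  moreover have "(2::nat)^(t-1) < 2^t" using assms by simp
  ultimately have in_range: "2^t*j + 2^(t-1) < D" "2^t*j < D" using D_eq by linarith+
  have "(\<Sum>p<D. rp_W \<theta> (Suc t) j p * F p)
      = (\<Sum>p<D. (if p = 2^t*j + 2^(t-1) then F p else 0) - (if p = 2^t*j then F p else 0))"
    by (rule sum.cong) (use assms in \<open>auto simp: max_tree_W_merge\<close>)
  then show "(\<Sum>p<D. rp_W \<theta> (Suc t) j p * F p) = F (2^t*j + 2^(t-1)) - F (2^t*j)"
    using in_range by (simp add: sum_subtractf)
  have "(\<Sum>p<D. \<bar>rp_W \<theta> (Suc t) j p\<bar> * F p)
      = (\<Sum>p<D. (if p = 2^t*j + 2^(t-1) then F p else 0) + (if p = 2^t*j then F p else 0))"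
    by (rule sum.cong) (use assms in \<open>auto simp: max_tree_W_merge\<close>)
  then show "(\<Sum>p<D. \<bar>rp_W \<theta> (Suc t) j p\<bar> * F p) = F (2^t*j + 2^(t-1)) + F (2^t*j)"
    using in_range by (simp add: sum.distrib)
qed

lemma merge_indices: "(2::nat)^Suc t * j = 2^t * (2*j)" "(2::nat)^t * (2*j) + 2^(Suc t - 1) = 2^t * (2*j+1)"
  by simp_all

lemma hidden_merge:
  assumes "t < \<alpha>" "j < 2^(\<alpha> - Suc t)"
  shows "hid x (Suc (Suc t)) (2^Suc t * j) = max (hid x (Suc t) (2^t*(2*j))) (hid x (Suc t) (2^t*(2*j+1)))"
proof -
  have "hid x (Suc (Suc t)) (2^Suc t * j)
      = hid x (Suc t) (2^Suc t * j) + relu (hid x (Suc t) (2^Suc t * j + 2^(Suc t - 1)) - hid x (Suc t) (2^Suc t * j))"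
    using assms by (simp only: res_hidden.simps sum_U_merge sum_W_merge zero_less_Suc Suc_leI)
  then show ?thesis by (simp only: merge_indices add_relu_diff)
qed

lemma hidden_carrier_step: "0 < t \<Longrightarrow> t \<le> \<alpha> \<Longrightarrow> hid x (Suc t) N = hid x t N"
  by (simp add: U_merge_carrier_zero)

lemma pn_merge:
  assumes "t < \<alpha>" "j < 2^(\<alpha> - Suc t)"
  shows "pn (Suc (Suc t)) (2^Suc t * j) j' = 4 * pn (Suc t) (2^t*(2*j)) j' + 3 * pn (Suc t) (2^t*(2*j+1)) j'"
proof -
  have "(\<Sum>p<D. (\<Sum>k<mw. \<bar>rp_U \<theta> (Suc (Suc t)) (2^Suc t*j) k\<bar> * \<bar>rp_W \<theta> (Suc (Suc t)) k p\<bar>) * pn (Suc t) p j')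
      = (\<Sum>p<D. \<bar>rp_W \<theta> (Suc (Suc t)) j p\<bar> * pn (Suc t) p j')"
    using assms by (simp only: sum_U_merge zero_less_Suc)
  also have "\<dots> = pn (Suc t) (2^t*(2*j+1)) j' + pn (Suc t) (2^t*(2*j)) j'"
    using assms by (simp only: sum_W_merge zero_less_Suc Suc_leI merge_indices)
  finally show ?thesis by (simp add: merge_indices del: power_Suc)
qed

lemma pn_carrier_step: "0 < t \<Longrightarrow> t \<le> \<alpha> \<Longrightarrow> pn (Suc t) N j' = pn t N j'"
  by (simp add: U_merge_carrier_zero)

lemma hidden_tree_max:
  "t \<le> \<alpha> \<Longrightarrow> (\<forall>j<2^(\<alpha>-t). hid x (Suc t) (2^t*j) = tree_max (\<lambda>i. shallow_net m (U i) (W i) x) t j)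
    \<and> hid x (Suc t) N = shallow_net m (U j0) (W j0) x"
proof (induction t)
  case 0
  then show ?case using hidden1_leaf hidden1_carrier by simp
next
  case (Suc t)
  then have IH: "\<forall>j<2^(\<alpha>-t). hid x (Suc t) (2^t*j) = tree_max (\<lambda>i. shallow_net m (U i) (W i) x) t j"
      "hid x (Suc t) N = shallow_net m (U j0) (W j0) x"
    by auto
  have "hid x (Suc (Suc t)) (2^Suc t*j) = tree_max (\<lambda>i. shallow_net m (U i) (W i) x) (Suc t) j"
    if j: "j < 2^(\<alpha>-Suc t)" for j
  proof -
    have "hid x (Suc (Suc t)) (2^Suc t*j) = max (hid x (Suc t) (2^t*(2*j))) (hid x (Suc t) (2^t*(2*j+1)))"
      using Suc.prems j by (intro hidden_merge) auto
    also have "\<dots> = tree_max (\<lambda>i. shallow_net m (U i) (W i) x) (Suc t) j"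
      using IH(1) pow2_children_less[of t \<alpha> j] Suc.prems j by (simp only: tree_max.simps)
    finally show ?thesis .
  qed
  moreover have "hid x (Suc (Suc t)) N = hid x (Suc t) N"
    using Suc.prems by (intro hidden_carrier_step) auto
  ultimately show ?case using IH(2) by (simp del: res_hidden.simps)
qed

lemma pn_tree_le:
  "t \<le> \<alpha> \<Longrightarrow> (\<forall>j<2^(\<alpha>-t). pn (Suc t) (2^t*j) j'
      \<le> 4^t * (\<Sum>i\<in>{2^t*j..<2^t*j+2^t}. shallow_mass m (U i) (W i) j'))
    \<and> pn (Suc t) N j' = shallow_mass m (U j0) (W j0) j'"
proof (induction t)
  case 0
  then show ?case using pn1_leaf pn1_carrier by simp
next
  case (Suc t)
  let ?S = "\<lambda>j. \<Sum>i\<in>{2^t*j..<2^t*j+2^t}. shallow_mass m (U i) (W i) j'"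
  from Suc have IH: "\<forall>j<2^(\<alpha>-t). pn (Suc t) (2^t*j) j' \<le> 4^t * ?S j"
      "pn (Suc t) N j' = shallow_mass m (U j0) (W j0) j'"
    by auto
  have "pn (Suc (Suc t)) (2^Suc t*j) j' \<le> 4^Suc t * (?S (2*j) + ?S (2*j+1))"
    if j: "j < 2^(\<alpha>-Suc t)" for j
  proof -
    have "pn (Suc (Suc t)) (2^Suc t*j) j' \<le> 4 * (4^t * ?S (2*j)) + 3 * (4^t * ?S (2*j+1))"
      using Suc.prems j pow2_children_less[of t \<alpha> j] IH(1)
      by (simp only: pn_merge Suc_le_lessD) (intro add_mono mult_left_mono, auto)
    also have "\<dots> \<le> 4^Suc t * (?S (2*j) + ?S (2*j+1))"
      using sum_nonneg[of _ "\<lambda>i. shallow_mass m (U i) (W i) j'", OF shallow_mass_nonneg]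
      by (simp add: algebra_simps)
    finally show ?thesis .
  qed
  moreover have "pn (Suc (Suc t)) N j' = pn (Suc t) N j'"
    using Suc.prems by (intro pn_carrier_step) auto
  ultimately show ?case using IH(2) by (simp add: sum_block_split del: pn_mat.simps power_Suc)
qed

lemma resnet_max_tree_net:
  "resnet mw D (\<alpha>+1) \<theta> x
     = c * Max ((\<lambda>i. shallow_net m (U i) (W i) x) ` {..<N}) + shallow_net m (U j0) (W j0) x"
proof -
  have "resnet mw D (\<alpha>+1) \<theta> x = (\<Sum>i<D. ((if i = 0 then c else 0) + (if i = N then 1 else 0)) * hid x (Suc \<alpha>) i)"
    unfolding resnet_def by (simp add: max_tree_u del: res_hidden.simps)
  also have "\<dots> = c * hid x (Suc \<alpha>) 0 + hid x (Suc \<alpha>) N"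
    using D_eq by (subst sum_two_delta) auto
  finally show ?thesis
    using hidden_tree_max[of \<alpha> x] by (simp add: tree_max_eq_Max lessThan_atLeast0 del: res_hidden.simps)
qed

lemma path_norm_max_tree_net_le:
  assumes "0 \<le> c"
  shows "path_norm mw D (\<alpha>+1) \<theta>
    \<le> 3 * (c * 4^\<alpha> * (\<Sum>i<N. shallow_weight m (U i) (W i)) + shallow_weight m (U j0) (W j0))"
proof -
  have "path_norm mw D (\<alpha>+1) \<theta> = (\<Sum>j'\<in>UNIV. c * pn (Suc \<alpha>) 0 j' + pn (Suc \<alpha>) N j')"
  proof -
    have "(\<Sum>i<D. \<bar>rp_u \<theta> i\<bar> * pn (Suc \<alpha>) i j')
        = (\<Sum>i<D. ((if i = 0 then c else 0) + (if i = N then 1 else 0)) * pn (Suc \<alpha>) i j')" for j'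
      using assms by (intro sum.cong) (auto simp: max_tree_u)
    also have "\<dots> j' = c * pn (Suc \<alpha>) 0 j' + pn (Suc \<alpha>) N j'" for j'
      using D_eq by (subst sum_two_delta) auto
    finally show ?thesis
      unfolding path_norm_def using assms by (simp add: pn_mat_nonneg del: pn_mat.simps)
  qed
  also have "\<dots> \<le> (\<Sum>j'\<in>UNIV. c * (4^\<alpha> * (\<Sum>i<N. shallow_mass m (U i) (W i) j')) + shallow_mass m (U j0) (W j0) j')"
    using pn_tree_le[of \<alpha>] assms
    by (intro sum_mono add_mono mult_left_mono) (auto simp: lessThan_atLeast0 simp del: pn_mat.simps)
  also have "\<dots> = c * 4^\<alpha> * (\<Sum>j'\<in>UNIV. \<Sum>i<N. shallow_mass m (U i) (W i) j')
      + (\<Sum>j'\<in>UNIV. shallow_mass m (U j0) (W j0) j')"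
    by (simp add: sum.distrib sum_distrib_left mult.assoc)
  also have "(\<Sum>j'\<in>UNIV. \<Sum>i<N. shallow_mass m (U i) (W i) j') = 3 * (\<Sum>i<N. shallow_weight m (U i) (W i))"
    by (subst sum.swap) (simp add: sum_shallow_mass sum_distrib_left)
  finally show ?thesis by (simp add: sum_shallow_mass algebra_simps)
qed

end

lemma exists_max_tree_family:
  fixes u :: "'a::finite \<Rightarrow> nat \<Rightarrow> real" and w :: "'a \<Rightarrow> nat \<Rightarrow> real^'d::finite"
  assumes card: "CARD('a) = 2^\<alpha>" and m: "0 < m" and width: "2^\<alpha> * m \<le> mw" and c: "0 \<le> c"
  shows "\<exists>\<Theta> :: 'a \<Rightarrow> 'd resparam.
    (\<forall>a x. resnet mw (2^\<alpha> + 1 + 2^\<alpha> * m) (\<alpha> + 1) (\<Theta> a) x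
        = c * Max (range (\<lambda>a'. shallow_net m (u a') (w a') x)) + shallow_net m (u a) (w a) x)
    \<and> family_path_norm mw (2^\<alpha> + 1 + 2^\<alpha> * m) (\<alpha> + 1) \<Theta>
        \<le> 3 * (c * real CARD('a) ^ 3 + 1) * (\<Sum>a\<in>UNIV. shallow_weight m (u a) (w a))"
proof -
  obtain idx :: "'a \<Rightarrow> nat" where bij: "bij_betw idx UNIV {..<2^\<alpha>}"
    using ex_bij_betw_finite_nat[of "UNIV :: 'a set"] card by (auto simp: atLeast0LessThan)
  define act where "act = inv_into UNIV idx"
  have act_idx: "act (idx a) = a" for a
    unfolding act_def using bij by (simp add: bij_betw_imp_inj_on)
  have idx_less: "idx a < 2^\<alpha>" for a using bij by (auto simp: bij_betw_def)
  define U where "U j = u (act j)" for j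
  define W where "W j = w (act j)" for j
  define \<Theta> where "\<Theta> a = max_tree_net \<alpha> m (idx a) c U W" for a
  have reindex: "(\<Sum>i<2^\<alpha>. f (act i)) = (\<Sum>a\<in>UNIV. f a)" for f :: "'a \<Rightarrow> real"
    using sum.reindex_bij_betw[OF bij, of "\<lambda>i. f (act i)"] by (simp add: act_idx)
  have image: "(\<lambda>i. f (act i)) ` {..<2^\<alpha>} = range f" for f :: "'a \<Rightarrow> real"
  proof -
    have "{..<2^\<alpha>} = range idx" using bij by (simp add: bij_betw_def)
    then show ?thesis by (simp add: image_comp comp_def act_idx)
  qed
  have "resnet mw (2^\<alpha> + 1 + 2^\<alpha> * m) (\<alpha> + 1) (\<Theta> a) x
      = c * Max (range (\<lambda>a'. shallow_net m (u a') (w a') x)) + shallow_net m (u a) (w a) x" for a x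
    unfolding \<Theta>_def using resnet_max_tree_net[OF m idx_less width refl, where c=c and U=U and W=W and x=x]
    by (simp add: U_def W_def act_idx image[of "\<lambda>a. shallow_net m (u a) (w a) x"])
  moreover have "family_path_norm mw (2^\<alpha> + 1 + 2^\<alpha> * m) (\<alpha> + 1) \<Theta>
      \<le> (\<Sum>a\<in>UNIV. 3 * (c * 4^\<alpha> * (\<Sum>a\<in>UNIV. shallow_weight m (u a) (w a)) + shallow_weight m (u a) (w a)))"
    unfolding family_path_norm_def \<Theta>_def
    using path_norm_max_tree_net_le[OF m idx_less width refl c, where U=U and W=W]
    by (intro sum_mono) (simp add: U_def W_def act_idx reindex[of "\<lambda>a. shallow_weight m (u a) (w a)"])
  moreover have "(4::real)^\<alpha> = real CARD('a) ^ 2"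
    by (simp add: card power_mult[symmetric] mult.commute[of \<alpha>] power_mult)
  ultimately show ?thesis
    by (intro exI[of _ \<Theta>]) (simp add: sum.distrib sum_distrib_left algebra_simps power3_eq_cube power2_eq_square)
qed

section \<open>The Bellman loss\<close>

lemma Max_shallow_Lipschitz:
  fixes u :: "'a::finite \<Rightarrow> nat \<Rightarrow> real" and w :: "'a \<Rightarrow> nat \<Rightarrow> real^'d::finite"
  shows "\<bar>Max (range (\<lambda>a. shallow_net m (u a) (w a) s)) - Max (range (\<lambda>a. shallow_net m (u a) (w a) s'))\<bar>
    \<le> (\<Sum>a\<in>UNIV. shallow_weight m (u a) (w a)) * infnorm (s - s')"
proof -
  have "\<bar>Max (range (\<lambda>a. shallow_net m (u a) (w a) s)) - Max (range (\<lambda>a. shallow_net m (u a) (w a) s'))\<bar>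
      \<le> (\<Sum>a\<in>UNIV. \<bar>shallow_net m (u a) (w a) s - shallow_net m (u a) (w a) s'\<bar>)"
    by (rule Max_image_diff_le) auto
  also have "\<dots> \<le> (\<Sum>a\<in>UNIV. shallow_weight m (u a) (w a) * infnorm (s - s'))"
    by (intro sum_mono shallow_net_Lipschitz)
  finally show ?thesis by (simp add: sum_distrib_right)
qed

lemma Max_shallow_transition_le:
  fixes u :: "'a::finite \<Rightarrow> nat \<Rightarrow> real" and w :: "'a \<Rightarrow> nat \<Rightarrow> real^'d::finite"
  assumes "s \<in> S" "\<forall>s\<in>S. \<forall>a. g s a 0 = s" "0 < \<Delta>t" "\<Delta>t < 1"
    and "\<forall>s\<in>S. \<forall>a. \<forall>t\<ge>0. \<forall>\<Delta>. 0 < \<Delta> \<and> \<Delta> < 1 \<longrightarrow> infnorm (g s a t - g s a (t + \<Delta>)) \<le> C * \<Delta>"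
  shows "\<bar>Max (range (\<lambda>a'. shallow_net m (u a') (w a') s)) - Max (range (\<lambda>a'. shallow_net m (u a') (w a') (g s a \<Delta>t)))\<bar>
    \<le> (\<Sum>a\<in>UNIV. shallow_weight m (u a) (w a)) * (C * \<Delta>t)"
proof -
  have "infnorm (s - g s a \<Delta>t) \<le> C * \<Delta>t" using assms by fastforce
  then have "(\<Sum>a\<in>UNIV. shallow_weight m (u a) (w a)) * infnorm (s - g s a \<Delta>t)
      \<le> (\<Sum>a\<in>UNIV. shallow_weight m (u a) (w a)) * (C * \<Delta>t)"
    by (intro mult_left_mono sum_nonneg shallow_weight_nonneg)
  then show ?thesis using Max_shallow_Lipschitz[of m u w s "g s a \<Delta>t"] by linarith
qed

lemma bellman_residual_eq:
  fixes h :: "'a::finite \<Rightarrow> 'b \<Rightarrow> real"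
  assumes "\<gamma> * (c + 1) = c"
  defines "M y \<equiv> Max (range (\<lambda>a. h a y))"
  shows "(c * M s + h a s) - r - \<gamma> * Max (range (\<lambda>a'. c * M s' + h a' s'))
    = (h a s - r) + c * (M s - M s')"
proof -
  have "Max (range (\<lambda>a'. c * M s' + h a' s')) = M s' + c * M s'"
    unfolding M_def using Max_add_commute[of UNIV "\<lambda>a'. h a' s'" "c * Max (range (\<lambda>a. h a s'))"]
    by (simp add: add.commute)
  moreover have "\<gamma> * (M s' + c * M s') = (\<gamma> * (c + 1)) * M s'" by (simp add: algebra_simps)
  then have "\<gamma> * (M s' + c * M s') = c * M s'" using assms(1) by simp
  ultimately show ?thesis by (simp add: algebra_simps)
qed

lemma bellman_residual_sq_le:
  fixes h :: "'a::finite \<Rightarrow> 'b \<Rightarrow> real"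
  assumes "\<gamma> * (c + 1) = c"
    and "\<bar>Max (range (\<lambda>a. h a s)) - Max (range (\<lambda>a. h a s'))\<bar> \<le> \<delta>"
  shows "((c * Max (range (\<lambda>a. h a s)) + h a s) - y
      - \<gamma> * Max (range (\<lambda>a'. c * Max (range (\<lambda>a. h a s')) + h a' s')))\<^sup>2
    \<le> 2 * (h a s - y)\<^sup>2 + 2 * c\<^sup>2 * \<delta>\<^sup>2"
proof -
  have "(c * (Max (range (\<lambda>a. h a s)) - Max (range (\<lambda>a. h a s'))))\<^sup>2 \<le> c\<^sup>2 * \<delta>\<^sup>2"
    using assms(2) abs_ge_zero power_mono[of "\<bar>_\<bar>" \<delta> 2] by (simp add: power_mult_distrib mult_left_mono)
  then show ?thesis
    unfolding bellman_residual_eq[OF assms(1)]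
    using square_sum_le[of "h a s - y" "c * (Max (range (\<lambda>a. h a s)) - Max (range (\<lambda>a. h a s')))"]
    by linarith
qed

lemma nn_integral_sq_le_twice_plus:
  assumes "prob_space M" "G \<in> borel_measurable M" "0 \<le> Q" "0 \<le> E"
    and "AE x in M. (F x)\<^sup>2 \<le> 2 * (G x)\<^sup>2 + Q" "(\<integral>\<^sup>+x. ennreal ((G x)\<^sup>2) \<partial>M) \<le> ennreal E"
  shows "(\<integral>\<^sup>+x. ennreal ((F x)\<^sup>2) \<partial>M) \<le> ennreal (2 * E + Q)"
proof -
  interpret prob_space M by fact
  have "ennreal ((F x)\<^sup>2) \<le> ennreal 2 * ennreal ((G x)\<^sup>2) + ennreal Q"
    if "(F x)\<^sup>2 \<le> 2 * (G x)\<^sup>2 + Q" for x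
  proof -
    have "ennreal ((F x)\<^sup>2) \<le> ennreal (2 * (G x)\<^sup>2 + Q)" using that by (rule ennreal_leI)
    also have "\<dots> = ennreal 2 * ennreal ((G x)\<^sup>2) + ennreal Q"
      using assms(3) by (subst ennreal_plus) (auto simp: ennreal_mult)
    finally show ?thesis .
  qed
  then have "(\<integral>\<^sup>+x. ennreal ((F x)\<^sup>2) \<partial>M) \<le> (\<integral>\<^sup>+x. ennreal 2 * ennreal ((G x)\<^sup>2) + ennreal Q \<partial>M)"
    using assms(5) by (intro nn_integral_mono_AE) (auto elim: AE_mp)
  also have "\<dots> = ennreal 2 * (\<integral>\<^sup>+x. ennreal ((G x)\<^sup>2) \<partial>M) + ennreal Q"
    using assms(2) by (simp add: nn_integral_add nn_integral_cmult emeasure_space_1)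
  also have "\<dots> \<le> ennreal 2 * ennreal E + ennreal Q"
    using assms(6) by (intro add_right_mono mult_left_mono) auto
  also have "\<dots> = ennreal (2 * E + Q)"
    using assms(3,4) by (simp add: ennreal_plus ennreal_mult)
  finally show ?thesis .
qed

lemma nn_integral_bellman_residual_le:
  fixes r :: "real^'d::finite \<Rightarrow> 'a::finite \<Rightarrow> real" and h :: "'a \<Rightarrow> real^'d \<Rightarrow> real"
  assumes S: "S \<in> sets lborel" "emeasure lborel S \<noteq> 0" "emeasure lborel S \<noteq> \<infinity>"
    and r_cont: "continuous_on S (\<lambda>s. r s a)" and h_meas [measurable]: "h a \<in> borel_measurable borel"
    and net: "\<And>a x. resnet mw D L (\<Theta> a) x = c * Max (range (\<lambda>a'. h a' x)) + h a x"
    and gamma: "\<gamma> * (c + 1) = c"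
    and step: "\<And>s a. s \<in> S \<Longrightarrow>
      \<bar>Max (range (\<lambda>a'. h a' s)) - Max (range (\<lambda>a'. h a' (g s a \<Delta>t)))\<bar> \<le> \<delta>"
    and err: "(\<integral>\<^sup>+s. ennreal ((r s a - h a s)\<^sup>2) \<partial>uniform_measure lborel S) \<le> ennreal E" "0 \<le> E"
  shows "(\<integral>\<^sup>+s. ennreal ((resnet mw D L (\<Theta> a) s - r s a
      - \<gamma> * Max (range (\<lambda>a'. resnet mw D L (\<Theta> a') (g s a \<Delta>t))))\<^sup>2) \<partial>uniform_measure lborel S)
    \<le> ennreal (2 * E + 2 * c\<^sup>2 * \<delta>\<^sup>2)"
proof (rule nn_integral_sq_le_twice_plus)
  let ?\<mu> = "uniform_measure lborel S"
  have AE_S: "AE s in ?\<mu>. s \<in> S" by (rule AE_uniform_measureI[OF S(1)]) simp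
  have [measurable]: "(\<lambda>s. indicator S s * r s a) \<in> borel_measurable borel"
    using borel_measurable_continuous_on_indicator[OF _ r_cont] S(1) by simp
  show "prob_space ?\<mu>" using S(2,3) by (rule prob_space_uniform_measure)
  show "(\<lambda>s. h a s - indicator S s * r s a) \<in> borel_measurable ?\<mu>" by measurable
  show "AE s in ?\<mu>. (resnet mw D L (\<Theta> a) s - r s a
      - \<gamma> * Max (range (\<lambda>a'. resnet mw D L (\<Theta> a') (g s a \<Delta>t))))\<^sup>2
    \<le> 2 * (h a s - indicator S s * r s a)\<^sup>2 + 2 * c\<^sup>2 * \<delta>\<^sup>2"
    using AE_S
  proof eventually_elim
    case (elim s)
    then show ?case
      using bellman_residual_sq_le[OF gamma step[OF elim, of a], of a "r s a"] by (simp add: net)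
  qed
  have "(\<integral>\<^sup>+s. ennreal ((h a s - indicator S s * r s a)\<^sup>2) \<partial>?\<mu>) = (\<integral>\<^sup>+s. ennreal ((r s a - h a s)\<^sup>2) \<partial>?\<mu>)"
    by (rule nn_integral_cong_AE) (use AE_S in \<open>eventually_elim, simp add: power2_commute\<close>)
  then show "(\<integral>\<^sup>+s. ennreal ((h a s - indicator S s * r s a)\<^sup>2) \<partial>?\<mu>) \<le> ennreal E"
    using err(1) by simp
qed (use err(2) in simp_all)

lemma bellman_loss_le:
  fixes r :: "real^'d::finite \<Rightarrow> 'a::finite \<Rightarrow> real" and h :: "'a \<Rightarrow> real^'d \<Rightarrow> real"
  assumes S: "S \<in> sets lborel" "emeasure lborel S \<noteq> 0" "emeasure lborel S \<noteq> \<infinity>"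
    and r_cont: "\<forall>a. continuous_on S (\<lambda>s. r s a)"
    and h_meas: "\<And>a. h a \<in> borel_measurable borel"
    and net: "\<And>a x. resnet mw D L (\<Theta> a) x = c * Max (range (\<lambda>a'. h a' x)) + h a x"
    and gamma: "\<gamma> * (c + 1) = c"
    and step: "\<And>s a. s \<in> S \<Longrightarrow>
      \<bar>Max (range (\<lambda>a'. h a' s)) - Max (range (\<lambda>a'. h a' (g s a \<Delta>t)))\<bar> \<le> \<delta>"
    and err: "\<And>a. (\<integral>\<^sup>+s. ennreal ((r s a - h a s)\<^sup>2) \<partial>uniform_measure lborel S) \<le> ennreal (E a)"
    and E_nonneg: "\<And>a. 0 \<le> E a"
  shows "bellman_loss S r g \<gamma> \<Delta>t mw D L \<Theta>
    \<le> ennreal (1 / (2 * real CARD('a)) * (\<Sum>a\<in>UNIV. 2 * E a + 2 * c\<^sup>2 * \<delta>\<^sup>2))"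
proof -
  have "(\<integral>\<^sup>+s. ennreal ((resnet mw D L (\<Theta> a) s - r s a
      - \<gamma> * Max (range (\<lambda>a'. resnet mw D L (\<Theta> a') (g s a \<Delta>t))))\<^sup>2) \<partial>uniform_measure lborel S)
    \<le> ennreal (2 * E a + 2 * c\<^sup>2 * \<delta>\<^sup>2)" for a
    by (rule nn_integral_bellman_residual_le[where r = r and h = h and g = g and \<Delta>t = \<Delta>t and a = a
        and E = "E a", OF S r_cont[rule_format] h_meas net gamma step err E_nonneg])
  then have "bellman_loss S r g \<gamma> \<Delta>t mw D L \<Theta>
      \<le> ennreal (1 / (2 * real CARD('a))) * (\<Sum>a\<in>UNIV. ennreal (2 * E a + 2 * c\<^sup>2 * \<delta>\<^sup>2))"
    unfolding bellman_loss_def by (intro mult_left_mono sum_mono) auto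
  also have "\<dots> = ennreal (1 / (2 * real CARD('a))) * ennreal (\<Sum>a\<in>UNIV. 2 * E a + 2 * c\<^sup>2 * \<delta>\<^sup>2)"
    using E_nonneg by (subst sum_ennreal) auto
  also have "\<dots> = ennreal (1 / (2 * real CARD('a)) * (\<Sum>a\<in>UNIV. 2 * E a + 2 * c\<^sup>2 * \<delta>\<^sup>2))"
    using E_nonneg by (intro ennreal_mult[symmetric] sum_nonneg) auto
  finally show ?thesis .
qed

lemma sum_le_sqrt_bound:
  fixes x K :: "'a \<Rightarrow> real"
  assumes "finite A" "\<And>a. a \<in> A \<Longrightarrow> x a \<le> 2 * sqrt (K a)" "\<And>a. a \<in> A \<Longrightarrow> 0 \<le> K a"
    and "(\<Sum>a\<in>A. K a) = 2 * R\<^sup>2" "0 \<le> R"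
  shows "(\<Sum>a\<in>A. x a) \<le> 2 * sqrt 2 * sqrt (real (card A)) * R"
proof -
  have "(\<Sum>a\<in>A. x a) \<le> 2 * (\<Sum>a\<in>A. sqrt (K a))"
    using assms(2) by (simp add: sum_distrib_left sum_mono)
  also have "\<dots> \<le> 2 * (sqrt (real (card A)) * sqrt (2 * R\<^sup>2))"
    using sum_sqrt_le_sqrt_card_mult[of A K] assms(3,4) by simp
  finally show ?thesis using assms(5) by (simp add: real_sqrt_mult mult_ac)
qed

lemma loss_bound_arith:
  fixes K :: "'a \<Rightarrow> real" and m R \<gamma> C dt P :: real
  assumes A: "finite A" "card A \<noteq> 0" and m: "0 < m" and \<gamma>: "0 < \<gamma>" "\<gamma> < 1"
    and K: "(\<Sum>a\<in>A. K a) = 2 * R\<^sup>2" and P: "P\<^sup>2 \<le> 8 * real (card A) * R\<^sup>2"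
  defines "n \<equiv> real (card A)"
  shows "1 / (2 * n) * (\<Sum>a\<in>A. 2 * (2 * K a / m) + 2 * (\<gamma> / (1 - \<gamma>))\<^sup>2 * (P * (C * dt))\<^sup>2)
    \<le> 1 / (1 - \<gamma>)\<^sup>2 * (256 * n ^ 5 * R\<^sup>2 / m + 576 * \<gamma>\<^sup>2 * C\<^sup>2 * dt\<^sup>2 * n ^ 7 * R\<^sup>2)"
proof -
  have n: "1 \<le> n" using A by (simp add: n_def Suc_le_eq card_gt_0_iff)
  have w: "1 \<le> 1 / (1 - \<gamma>)\<^sup>2" using \<gamma> by (simp add: power_le_one field_simps)
  have "1 / (2 * n) * (\<Sum>a\<in>A. 2 * (2 * K a / m) + 2 * (\<gamma> / (1 - \<gamma>))\<^sup>2 * (P * (C * dt))\<^sup>2)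
      = 4 * R\<^sup>2 / (n * m) + (\<gamma> / (1 - \<gamma>))\<^sup>2 * (C * dt)\<^sup>2 * P\<^sup>2"
    using n m K by (simp add: sum.distrib sum_divide_distrib[symmetric] sum_distrib_left[symmetric]
        sum_distrib_right[symmetric] n_def field_simps power_mult_distrib)
  also have "\<dots> \<le> 1 / (1 - \<gamma>)\<^sup>2 * (256 * n ^ 5 * R\<^sup>2 / m)
      + 1 / (1 - \<gamma>)\<^sup>2 * (576 * \<gamma>\<^sup>2 * C\<^sup>2 * dt\<^sup>2 * n ^ 7 * R\<^sup>2)"
  proof (rule add_mono)
    have "4 * R\<^sup>2 \<le> 256 * n ^ 6 * R\<^sup>2"
      using one_le_power[OF n, of 6] by (intro mult_right_mono) auto
    then have "4 * R\<^sup>2 / (n * m) \<le> 256 * n ^ 6 * R\<^sup>2 / (n * m)"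
      using n m by (intro divide_right_mono) auto
    also have "\<dots> = 256 * n ^ 5 * R\<^sup>2 / m"
      using n by (simp add: eval_nat_numeral)
    finally have "4 * R\<^sup>2 / (n * m) \<le> 256 * n ^ 5 * R\<^sup>2 / m" .
    also have "\<dots> \<le> 1 / (1 - \<gamma>)\<^sup>2 * (256 * n ^ 5 * R\<^sup>2 / m)"
      using mult_right_mono[OF w, of "256 * n ^ 5 * R\<^sup>2 / m"] n m by simp
    finally show "4 * R\<^sup>2 / (n * m) \<le> 1 / (1 - \<gamma>)\<^sup>2 * (256 * n ^ 5 * R\<^sup>2 / m)" .
    have "P\<^sup>2 \<le> 8 * n * R\<^sup>2" using P by (simp add: n_def)
    also have "\<dots> \<le> 576 * n ^ 7 * R\<^sup>2"
      using power_increasing[of 1 7 n] n by (intro mult_right_mono mult_mono) auto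
    finally have "P\<^sup>2 \<le> 576 * n ^ 7 * R\<^sup>2" .
    then have "(\<gamma> / (1 - \<gamma>))\<^sup>2 * (C * dt)\<^sup>2 * P\<^sup>2 \<le> (\<gamma> / (1 - \<gamma>))\<^sup>2 * (C * dt)\<^sup>2 * (576 * n ^ 7 * R\<^sup>2)"
      by (intro mult_left_mono) auto
    also have "\<dots> \<le> 1 / (1 - \<gamma>)\<^sup>2 * (576 * \<gamma>\<^sup>2 * C\<^sup>2 * dt\<^sup>2 * n ^ 7 * R\<^sup>2)"
      using n by (simp add: power_divide power_mult_distrib field_simps)
    finally show "(\<gamma> / (1 - \<gamma>))\<^sup>2 * (C * dt)\<^sup>2 * P\<^sup>2 \<le> 1 / (1 - \<gamma>)\<^sup>2 * (576 * \<gamma>\<^sup>2 * C\<^sup>2 * dt\<^sup>2 * n ^ 7 * R\<^sup>2)" .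
  qed
  finally show ?thesis by (simp add: distrib_left)
qed

lemma path_norm_bound_arith:
  fixes n P R \<gamma> :: real
  assumes n: "1 \<le> n" and \<gamma>: "0 \<le> \<gamma>" "\<gamma> < 1" and P: "0 \<le> P" "P \<le> 2 * sqrt 2 * sqrt n * R"
  shows "3 * (\<gamma> / (1 - \<gamma>) * n ^ 3 + 1) * P \<le> 24 / (1 - \<gamma>) * n powr (7/2) * R"
proof -
  have "\<gamma> * n ^ 3 + (1 - \<gamma>) \<le> n ^ 3"
    using mult_nonneg_nonneg[of "1 - \<gamma>" "n ^ 3 - 1"] \<gamma> one_le_power[OF n, of 3]
    by (simp add: algebra_simps)
  moreover have "\<gamma> / (1 - \<gamma>) * n ^ 3 + 1 = (\<gamma> * n ^ 3 + (1 - \<gamma>)) / (1 - \<gamma>)"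
    using \<gamma> by (simp add: field_simps)
  ultimately have "\<gamma> / (1 - \<gamma>) * n ^ 3 + 1 \<le> n ^ 3 / (1 - \<gamma>)"
    using \<gamma> by (simp add: divide_right_mono)
  then have "3 * (\<gamma> / (1 - \<gamma>) * n ^ 3 + 1) * P \<le> 3 * (n ^ 3 / (1 - \<gamma>)) * (2 * sqrt 2 * sqrt n * R)"
    using P \<gamma> n by (intro mult_mono) auto
  also have "\<dots> \<le> 24 / (1 - \<gamma>) * (n ^ 3 * sqrt n) * R"
  proof -
    have s2: "sqrt 2 \<le> 4" by (rule real_le_lsqrt) auto
    have "0 \<le> 2 * sqrt 2 * sqrt n * R" using P by linarith
    moreover have "0 < 2 * sqrt 2 * sqrt n" using n by simp
    ultimately have "0 \<le> R" using zero_le_mult_iff[of "2 * sqrt 2 * sqrt n" R] by linarith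
    then have X: "0 \<le> n ^ 3 * sqrt n * R / (1 - \<gamma>)"
      using n \<gamma> by (intro divide_nonneg_pos mult_nonneg_nonneg) auto
    have "3 * (n ^ 3 / (1 - \<gamma>)) * (2 * sqrt 2 * sqrt n * R) = (6 * sqrt 2) * (n ^ 3 * sqrt n * R / (1 - \<gamma>))"
      by (simp add: field_simps)
    also have "\<dots> \<le> 24 * (n ^ 3 * sqrt n * R / (1 - \<gamma>))" using s2 X by (intro mult_right_mono) auto
    finally show ?thesis by (simp add: field_simps)
  qed
  also have "n ^ 3 * sqrt n = n powr (7/2)"
  proof -
    have "n powr (7/2) = n powr 3 * n powr (1/2)" by (simp flip: powr_add)
    then show ?thesis using n by (simp add: powr_half_sqrt powr_realpow)
  qed
  finally show ?thesis .
qed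

theorem theorem3p5:
  fixes S :: "(real^'d::finite) set"
    and r :: "real^'d \<Rightarrow> 'a::finite \<Rightarrow> real"
    and g :: "real^'d \<Rightarrow> 'a \<Rightarrow> real \<Rightarrow> real^'d"
    and \<alpha> m :: nat and \<gamma> C\<^sub>T \<Delta>t :: real
  assumes S_compact: "compact S"
    and S_cube: "\<forall>x\<in>S. \<forall>i. 0 \<le> x $ i \<and> x $ i \<le> 1"
    and S_pos: "emeasure lborel S > 0"
    and A_card: "CARD('a) = 2 ^ \<alpha>"
    and gamma: "0 < \<gamma>" "\<gamma> < 1"
    and r_cont: "\<forall>a. continuous_on S (\<lambda>s. r s a)"
    and r_barron: "\<forall>a. barron_space S (\<lambda>s. r s a)"
    and r_bound: "\<forall>s\<in>S. \<forall>a. \<bar>r s a\<bar> \<le> 1"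
    and g_maps: "\<forall>s\<in>S. \<forall>a. \<forall>t\<ge>0. g s a t \<in> S"
    and g_zero: "\<forall>s\<in>S. \<forall>a. g s a 0 = s"
    and g_semigroup: "\<forall>s\<in>S. \<forall>a. \<forall>t\<ge>0. \<forall>t'\<ge>0. g (g s a t) a t' = g s a (t + t')"
    and CT_pos: "C\<^sub>T > 0"
    and g_lip: "\<forall>s\<in>S. \<forall>a. \<forall>t\<ge>0. \<forall>\<Delta>. 0 < \<Delta> \<and> \<Delta> < 1 \<longrightarrow>
                   infnorm (g s a t - g s a (t + \<Delta>)) \<le> C\<^sub>T * \<Delta>"
    and dt: "0 < \<Delta>t" "\<Delta>t < 1"
    and m_pos: "m > 0"
  shows "\<exists>D\<^sub>0 > 0. \<exists>\<Theta> :: 'a \<Rightarrow> 'd resparam.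
     bellman_loss S r g \<gamma> \<Delta>t ((6 ^ \<alpha> + 1) * m) D\<^sub>0 (\<alpha> + 1) \<Theta>
       \<le> ennreal (1 / (1 - \<gamma>)\<^sup>2 *
            (256 * real CARD('a) ^ 5 * (reward_barron_norm S r)\<^sup>2 / real m
             + 576 * \<gamma>\<^sup>2 * C\<^sub>T\<^sup>2 * \<Delta>t\<^sup>2 * real CARD('a) ^ 7 * (reward_barron_norm S r)\<^sup>2))
     \<and> family_path_norm ((6 ^ \<alpha> + 1) * m) D\<^sub>0 (\<alpha> + 1) \<Theta>
       \<le> 24 / (1 - \<gamma>) * real CARD('a) powr (7/2) * reward_barron_norm S r"
proof -
  let ?R = "reward_barron_norm S r" and ?n = "real CARD('a)"
  define K where "K a = (barron_norm S (\<lambda>s. r s a))\<^sup>2 + ?R\<^sup>2 / ?n" for a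
  note S = unit_cube_subset[OF S_compact S_cube]
  have S_nonzero: "emeasure lborel S \<noteq> 0" using S_pos by simp
  obtain u w where approx: "\<And>a. (\<integral>\<^sup>+s. ennreal ((r s a - shallow_net m (u a) (w a) s)\<^sup>2) \<partial>uniform_measure lborel S)
      \<le> ennreal (2 * K a / real m)" and weight: "\<And>a. shallow_weight m (u a) (w a) \<le> 2 * sqrt (K a)"
    using exists_reward_approximants[OF S(1) S_nonzero S(2,3) r_cont r_barron m_pos] unfolding K_def by blast
  define P where "P = (\<Sum>a\<in>UNIV. shallow_weight m (u a) (w a))"
  have sum_K: "(\<Sum>a\<in>UNIV. K a) = 2 * ?R\<^sup>2" by (simp add: K_def sum.distrib reward_barron_norm_sq)
  have P_nonneg: "0 \<le> P" unfolding P_def by (intro sum_nonneg shallow_weight_nonneg)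
  have P_le: "P \<le> 2 * sqrt 2 * sqrt ?n * ?R"
    unfolding P_def by (rule sum_le_sqrt_bound[OF _ weight _ sum_K]) (auto simp: K_def reward_barron_norm_def intro: sum_nonneg)
  have "2^\<alpha> * m \<le> (6^\<alpha> + 1) * m" by (intro mult_le_mono1 trans_le_add1 power_mono) auto
  moreover have "0 \<le> \<gamma> / (1 - \<gamma>)" using gamma by simp
  ultimately obtain \<Theta> :: "'a \<Rightarrow> 'd resparam" where net: "\<And>a x. resnet ((6^\<alpha> + 1) * m) (2^\<alpha> + 1 + 2^\<alpha> * m) (\<alpha> + 1) (\<Theta> a) x
      = \<gamma> / (1 - \<gamma>) * Max (range (\<lambda>a'. shallow_net m (u a') (w a') x)) + shallow_net m (u a) (w a) x"
    and pnorm: "family_path_norm ((6^\<alpha> + 1) * m) (2^\<alpha> + 1 + 2^\<alpha> * m) (\<alpha> + 1) \<Theta> \<le> 3 * (\<gamma> / (1 - \<gamma>) * ?n ^ 3 + 1) * P"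
    using exists_max_tree_family[OF A_card m_pos, of _ "\<gamma> / (1 - \<gamma>)" u w] unfolding P_def by blast
  have "bellman_loss S r g \<gamma> \<Delta>t ((6^\<alpha> + 1) * m) (2^\<alpha> + 1 + 2^\<alpha> * m) (\<alpha> + 1) \<Theta>
      \<le> ennreal (1 / (2 * ?n) * (\<Sum>a\<in>UNIV. 2 * (2 * K a / real m) + 2 * (\<gamma> / (1 - \<gamma>))\<^sup>2 * (P * (C\<^sub>T * \<Delta>t))\<^sup>2))"
    using Max_shallow_transition_le[OF _ g_zero dt g_lip] gamma unfolding P_def
    by (intro bellman_loss_le[where h = "\<lambda>a. shallow_net m (u a) (w a)" and r = r and g = g,
          OF S(1) _ S(2) r_cont _ net _ _ approx]) (auto simp: field_simps K_def S_nonzero)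
  also have "\<dots> \<le> ennreal (1 / (1 - \<gamma>)\<^sup>2 * (256 * ?n ^ 5 * ?R\<^sup>2 / real m + 576 * \<gamma>\<^sup>2 * C\<^sub>T\<^sup>2 * \<Delta>t\<^sup>2 * ?n ^ 7 * ?R\<^sup>2))"
    using m_pos gamma sum_K power_mono[OF P_le P_nonneg, of 2]
    by (intro ennreal_leI loss_bound_arith) (auto simp: power_mult_distrib)
  finally show ?thesis
    using pnorm path_norm_bound_arith[OF _ _ gamma(2) P_nonneg P_le] gamma
    by (intro exI[of _ "2^\<alpha> + 1 + 2^\<alpha> * m"]) force
qed

end
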